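(* Given $0<\lambda\le\Lambda$ and $N$, there exist $r_0,\alpha,\delta\in(0,1)$ depending only on $\lambda,\Lambda,N$ such that the following holds. Let $\rho\in(0,r_0)$, let $K\in L^\infty(B_{2\rho^2}\times B_1)$ with $\lambda\le K\le\Lambda$, and let $u\in L^1(B_{1+2\rho^2})\cap C^{Dini}_{loc}(B_{2\rho^2})$ satisfy: (i) $L_Ku\ge-\delta\,\ell^{\alpha-1}(\rho^2)$ in $B_{2\rho^2}$; (ii) $u(x)\ge-\big(\ell^\alpha(|x|)-\ell^\alpha(\rho)\big)_+$ for all $x\in B_{1+2\rho^2}$; (iii) $\mu\big(\{u\ge\ell^\alpha(\rho)/2\}\cap B_\rho\setminus B_{3\rho^2}\big)\ge\frac12\mu(B_\rho\setminus B_{3\rho^2})$, where $\mu(dx):=\ell(|x|)|x|^{-N}dx$. Then $\inf_{B_{\rho^2}}u\ge\ell^\alpha(\rho)-\ell^\alpha(\rho^2)$.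
   Context: $\ell(\rho):=|\ln(\min\{\rho,1/10\})|^{-1}$ for $\rho>0$. $B_r$ is the open ball of radius $r$ centered at $0$. $C^{Dini}_{loc}(U)$: functions that on every closed ball in $U$ admit a modulus of continuity $\omega$ with $\int_0^1\omega(\rho)\rho^{-1}d\rho<\infty$. $L_Ku(x):=\int_{B_1(x)}\frac{u(x)-u(y)}{|y-x|^N}K(x,y-x)\,dy$. *)

theory Defs
  imports "HOL-Analysis.Analysis"
begin

text \<open>ell rho = |ln (min rho (1/10))|^(-1); for rho = 0 this gives 0 (its limit).\<close>
definition ell :: "real \<Rightarrow> real" where
  "ell \<rho> = inverse \<bar>ln (min \<rho> (1/10))\<bar>"

definition dini_modulus :: "(real \<Rightarrow> real) \<Rightarrow> bool" where
  "dini_modulus \<omega> \<longleftrightarrow> (\<forall>r\<ge>0. 0 \<le> \<omega> r) \<and> mono_on {0..} \<omega> \<and>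
     (\<omega> \<longlongrightarrow> 0) (at_right 0) \<and>
     set_integrable lborel {0<..<1} (\<lambda>r. \<omega> r / r)"

definition dini_loc :: "'a::metric_space set \<Rightarrow> ('a \<Rightarrow> real) \<Rightarrow> bool" where
  "dini_loc U u \<longleftrightarrow> (\<forall>x r. cball x r \<subseteq> U \<longrightarrow>
     (\<exists>\<omega>. dini_modulus \<omega> \<and>
        (\<forall>y\<in>cball x r. \<forall>z\<in>cball x r. \<bar>u y - u z\<bar> \<le> \<omega> (dist y z))))"

definition L_K :: "('a::euclidean_space \<Rightarrow> 'a \<Rightarrow> real) \<Rightarrow> ('a \<Rightarrow> real) \<Rightarrow> 'a \<Rightarrow> real" where
  "L_K K u x = set_lebesgue_integral lebesgue (ball x 1)
     (\<lambda>y. (u x - u y) / norm (y - x) ^ DIM('a) * K x (y - x))"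

definition ell_measure :: "'a::euclidean_space measure" where
  "ell_measure = density lebesgue (\<lambda>x. ennreal (ell (norm x) / norm x ^ DIM('a)))"

end

theory Submission
  imports Defs
begin

text \<open>
  Suppose u(x0) < ell(rho)^alpha - ell(rho^2)^alpha =: T for some x0 in B_{rho^2}.  The barrier (ii)
  makes u nonnegative on B_rho, so raising the paraboloid -T |y|^2 / rho^4 until it touches u from
  below yields a point xb in B_{3 rho^2 / 2} with u(xb) < 2T and u(xb) - u(y) <= 4T |y - xb| / rho^2
  near xb.  At xb the integrand of L_K u is bounded above by three radial functions: an integrable
  singularity near xb; the far field allowed by the barrier, whose integral is
  O(alpha ell(rho)^(alpha-1)) + O(1); and minus a multiple of ell(rho)^alpha |y|^(-N) on the set where
  u >= ell(rho)^alpha / 2, which by (iii) has mu-measure bounded below, so that this term contributes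
  a negative amount of order ell(rho)^(alpha-1).  Integrating in polar coordinates gives
  L_K u(xb) <= -c ell(rho)^(alpha-1) once alpha and rho are small, contradicting (i).
\<close>

section \<open>Polar coordinates\<close>

lemma distr_neg_norm_lborel:
  "distr (lborel::'a::euclidean_space measure) borel (\<lambda>z. - norm z)
    = density lborel (\<lambda>t. ennreal (DIM('a) * unit_ball_vol DIM('a) * (-t)^(DIM('a)-1)) * indicator {..0} t)"
    (is "_ = density lborel ?f")
proof (rule measure_eqI_lessThan)
  let ?N = "DIM('a)" let ?c = "unit_ball_vol DIM('a)"
  fix x :: real
  have s: "(\<lambda>z::'a. - norm z) -` {x<..} = ball 0 (-x)" by auto
  show "emeasure (distr (lborel::'a measure) borel (\<lambda>z. - norm z)) {x<..} < \<infinity>"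
    using emeasure_bounded_finite[of "ball (0::'a) (-x)"] by (simp add: emeasure_distr s)
  show "emeasure (distr (lborel::'a measure) borel (\<lambda>z. - norm z)) {x<..} = emeasure (density lborel ?f) {x<..}"
  proof (cases "x < 0")
    case False
    then have "(\<lambda>t. ?f t * indicator {x<..} t) = (\<lambda>_. 0)"
      by (auto simp: indicator_def fun_eq_iff)
    moreover have "emeasure lborel (ball (0::'a) (-x)) = 0" using False by (simp add: ball_empty)
    ultimately show ?thesis by (simp add: emeasure_distr s emeasure_density)
  next
    case True
    have "emeasure (density lborel ?f) {x<..} = (\<integral>\<^sup>+t. ?f t * indicator {x<..} t \<partial>lborel)"
      by (simp add: emeasure_density)
    also have "\<dots> = (\<integral>\<^sup>+t. ennreal (?N * ?c * (-t)^(?N-1)) * indicator {x..0} t \<partial>lborel)"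
      using AE_lborel_singleton[of x]
      by (intro nn_integral_cong_AE) (auto simp: indicator_def elim!: eventually_mono)
    also have "\<dots> = ennreal ((- ?c * (-0)^?N) - (- ?c * (-x)^?N))"
      using True
      by (intro nn_integral_FTC_Icc) (auto intro!: derivative_eq_intros simp: power_Suc[symmetric])
    also have "\<dots> = ennreal (?c * (-x)^?N)" by (simp add: zero_power DIM_positive)
    finally show ?thesis using True by (simp add: emeasure_distr s emeasure_ball)
  qed
qed simp_all

lemma nn_integral_lborel_radial:
  fixes h :: "real \<Rightarrow> ennreal"
  assumes [measurable]: "h \<in> borel_measurable borel"
  shows "(\<integral>\<^sup>+z. h (norm z) \<partial>(lborel::'a::euclidean_space measure)) =
    (\<integral>\<^sup>+t. ennreal (DIM('a) * unit_ball_vol DIM('a) * t^(DIM('a)-1)) * indicator {0..} t * h t \<partial>lborel)"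
proof -
  let ?N = "DIM('a)" let ?c = "unit_ball_vol DIM('a)"
  define f where "f t = ennreal (?N * ?c * (-t)^(?N-1)) * indicator {..0} t" for t :: real
  have [measurable]: "f \<in> borel_measurable borel" unfolding f_def by measurable
  have "(\<integral>\<^sup>+z. h (norm z) \<partial>(lborel::'a measure)) = (\<integral>\<^sup>+t. h (- t) \<partial>distr (lborel::'a measure) borel (\<lambda>z. - norm z))"
    by (subst nn_integral_distr) auto
  also have "\<dots> = (\<integral>\<^sup>+t. f t * h (- t) \<partial>lborel)"
    unfolding distr_neg_norm_lborel f_def[symmetric] by (simp add: nn_integral_density)
  also have "\<dots> = ennreal \<bar>-1\<bar> * (\<integral>\<^sup>+t. f (0 + -1 * t) * h (- (0 + -1 * t)) \<partial>lborel)"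
    by (rule nn_integral_real_affine) auto
  also have "\<dots> = (\<integral>\<^sup>+t. ennreal (?N * ?c * t^(?N-1)) * indicator {0..} t * h t \<partial>lborel)"
    by (auto simp: f_def indicator_def intro!: nn_integral_cong)
  finally show ?thesis .
qed

lemma nn_integral_lborel_translate:
  fixes h :: "'a::euclidean_space \<Rightarrow> ennreal"
  assumes [measurable]: "h \<in> borel_measurable borel"
  shows "(\<integral>\<^sup>+y. h (y - a) \<partial>lborel) = (\<integral>\<^sup>+z. h z \<partial>lborel)"
proof -
  have "(\<integral>\<^sup>+y. h (y - a) \<partial>lborel) = (\<integral>\<^sup>+y. h (y - a) \<partial>distr lborel borel ((+) a))"
    by (simp add: lborel_distr_plus)
  also have "\<dots> = (\<integral>\<^sup>+z. h z \<partial>lborel)" by (subst nn_integral_distr) auto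
  finally show ?thesis .
qed

lemma nn_integral_radial_annulus:
  fixes g :: "real \<Rightarrow> real"
  assumes [measurable]: "g \<in> borel_measurable borel" and "0 < a"
  shows "(\<integral>\<^sup>+z. ennreal (indicator {a..b} (norm z) * g (norm z) / norm z ^ DIM('a)) \<partial>(lborel::'a::euclidean_space measure))
    = ennreal (DIM('a) * unit_ball_vol DIM('a)) * (\<integral>\<^sup>+t. ennreal (g t / t) * indicator {a..b} t \<partial>lborel)"
proof -
  let ?N = "DIM('a)" let ?s = "DIM('a) * unit_ball_vol DIM('a)"
  have "(\<integral>\<^sup>+z. ennreal (indicator {a..b} (norm z) * g (norm z) / norm z ^ ?N) \<partial>(lborel::'a measure))
     = (\<integral>\<^sup>+t. ennreal (?s * t^(?N-1)) * indicator {0..} t * ennreal (indicator {a..b} t * g t / t ^ ?N) \<partial>lborel)"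
    by (rule nn_integral_lborel_radial) measurable
  also have "\<dots> = (\<integral>\<^sup>+t. ennreal ?s * (ennreal (g t / t) * indicator {a..b} t) \<partial>lborel)"
  proof (intro nn_integral_cong)
    fix t :: real
    show "ennreal (?s * t^(?N-1)) * indicator {0..} t * ennreal (indicator {a..b} t * g t / t ^ ?N) =
      ennreal ?s * (ennreal (g t / t) * indicator {a..b} t)"
    proof (cases "t \<in> {a..b}")
      case True
      then have t: "t > 0" using \<open>0 < a\<close> by auto
      have e: "t^(?N-1) / t^?N = 1 / t" using t
        by (metis DIM_positive One_nat_def Suc_pred divide_divide_eq_left' nonzero_divide_mult_cancel_right
            order_less_irrefl power_Suc power_not_zero)
      have "?s * t^(?N-1) * (g t / t ^ ?N) = ?s * g t * (t^(?N-1) / t^?N)" by simp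
      also have "\<dots> = ?s * (g t / t)" using e by simp
      finally have "?s * t^(?N-1) * (g t / t ^ ?N) = ?s * (g t / t)" .
      moreover have "0 \<le> ?s * t^(?N-1)" using t by simp
      ultimately show ?thesis using True t
        by (simp add: ennreal_mult'[symmetric] mult.assoc indicator_def)
    qed simp
  qed
  also have "\<dots> = ennreal ?s * (\<integral>\<^sup>+t. ennreal (g t / t) * indicator {a..b} t \<partial>lborel)"
    by (rule nn_integral_cmult) measurable
  finally show ?thesis .
qed

lemma nn_integral_radial_singular_le:
  fixes g :: "real \<Rightarrow> real"
  assumes [measurable]: "g \<in> borel_measurable borel" and g: "\<And>t. 0 \<le> g t"
  shows "(\<integral>\<^sup>+z. ennreal (indicator {..b} (norm z) * g (norm z) / norm z ^ (DIM('a) - 1)) \<partial>(lborel::'a::euclidean_space measure))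
    \<le> ennreal (DIM('a) * unit_ball_vol DIM('a)) * (\<integral>\<^sup>+t. ennreal (g t) * indicator {0..b} t \<partial>lborel)"
proof -
  let ?N = "DIM('a)" let ?s = "DIM('a) * unit_ball_vol DIM('a)"
  have "(\<integral>\<^sup>+z. ennreal (indicator {..b} (norm z) * g (norm z) / norm z ^ (?N - 1)) \<partial>(lborel::'a measure))
     = (\<integral>\<^sup>+t. ennreal (?s * t^(?N-1)) * indicator {0..} t * ennreal (indicator {..b} t * g t / t ^ (?N - 1)) \<partial>lborel)"
    by (rule nn_integral_lborel_radial) measurable
  also have "\<dots> \<le> (\<integral>\<^sup>+t. ennreal ?s * (ennreal (g t) * indicator {0..b} t) \<partial>lborel)"
  proof (intro nn_integral_mono)
    fix t :: real
    show "ennreal (?s * t^(?N-1)) * indicator {0..} t * ennreal (indicator {..b} t * g t / t ^ (?N - 1)) \<le>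
      ennreal ?s * (ennreal (g t) * indicator {0..b} t)"
    proof (cases "t \<in> {0..b}")
      case True
      have le: "?s * t^(?N-1) * (g t / t ^ (?N-1)) \<le> ?s * g t"
      proof (cases "t^(?N-1) = 0")
        case True
        have "0 \<le> ?s * g t" using g[of t] by (intro mult_nonneg_nonneg) auto
        moreover have "?s * t^(?N-1) * (g t / t ^ (?N-1)) = 0" using True by simp
        ultimately show ?thesis by linarith
      next
        case False
        then have "t^(?N-1) * (g t / t ^ (?N-1)) = g t" by simp
        then show ?thesis by (metis mult.assoc order_refl)
      qed
      have "ennreal (?s * t^(?N-1)) * ennreal (g t / t ^ (?N - 1)) = ennreal (?s * t^(?N-1) * (g t / t ^ (?N-1)))"
        using True by (intro ennreal_mult'[symmetric]) auto
      also have "\<dots> \<le> ennreal (?s * g t)" using le by (rule ennreal_leI)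
      also have "\<dots> = ennreal ?s * ennreal (g t)" by (simp add: ennreal_mult')
      finally show ?thesis using True by (simp add: indicator_def)
    qed (auto simp: indicator_def)
  qed
  also have "\<dots> = ennreal ?s * (\<integral>\<^sup>+t. ennreal (g t) * indicator {0..b} t \<partial>lborel)"
    by (rule nn_integral_cmult) measurable
  finally show ?thesis .
qed

lemma integrable_lebesgue_nn_integral_le:
  fixes p :: "'a::euclidean_space \<Rightarrow> real"
  assumes [measurable]: "p \<in> borel_measurable borel" and p: "\<And>x. 0 \<le> p x"
    and le: "(\<integral>\<^sup>+x. ennreal (p x) \<partial>lborel) \<le> ennreal c" and c: "0 \<le> c"
  shows "integrable lebesgue p" "integral\<^sup>L lebesgue p \<le> c"
proof -
  have "(\<integral>\<^sup>+x. ennreal (p x) \<partial>lborel) < \<infinity>" using le by (simp add: le_less_trans)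
  then have "integrable lborel p" using p by (intro integrableI_nonneg) auto
  then show int: "integrable lebesgue p" by (subst integrable_completion) auto
  have "ennreal (integral\<^sup>L lebesgue p) = (\<integral>\<^sup>+x. ennreal (p x) \<partial>lborel)"
    using nn_integral_eq_integral[OF int] p by (simp add: nn_integral_completion)
  with le have "ennreal (integral\<^sup>L lebesgue p) \<le> ennreal c" by simp
  with c show "integral\<^sup>L lebesgue p \<le> c" by (simp add: ennreal_le_iff)
qed

lemma integrable_lebesgue_radial_singular:
  fixes f :: "real \<Rightarrow> real" and x :: "'a::euclidean_space"
  assumes f: "integrable lborel f" "\<And>t. 0 \<le> f t"
  shows "integrable lebesgue
    (\<lambda>y. indicator {..r} (norm (y - x)) * f (norm (y - x)) / norm (y - x) ^ (DIM('a) - 1))"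
    (is "integrable lebesgue ?h")
proof -
  have [measurable]: "f \<in> borel_measurable borel" using borel_measurable_integrable[OF f(1)] by simp
  have "(\<integral>\<^sup>+y. ennreal (?h y) \<partial>lborel)
      = (\<integral>\<^sup>+z. ennreal (indicator {..r} (norm z) * f (norm z) / norm z ^ (DIM('a) - 1)) \<partial>(lborel::'a measure))"
    by (rule nn_integral_lborel_translate[where h = "\<lambda>z. ennreal (indicator {..r} (norm z) * f (norm z) / norm z ^ (DIM('a) - 1))"])
      measurable
  also have "\<dots> \<le> ennreal (DIM('a) * unit_ball_vol DIM('a)) * (\<integral>\<^sup>+t. ennreal (f t) * indicator {0..r} t \<partial>lborel)"
    by (rule nn_integral_radial_singular_le[OF _ f(2)]) measurable
  also have "\<dots> \<le> ennreal (DIM('a) * unit_ball_vol DIM('a)) * (\<integral>\<^sup>+t. ennreal (f t) \<partial>lborel)"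
    by (intro mult_left_mono nn_integral_mono) (auto simp: indicator_def)
  also have "\<dots> < \<infinity>"
    using f unfolding integrable_iff_bounded by (simp add: ennreal_mult_less_top)
  finally have "integrable lborel ?h" using f(2) by (intro integrableI_nonneg) auto
  then show ?thesis by (subst integrable_completion) auto
qed

lemma integral_radial_annulus_le:
  fixes g :: "real \<Rightarrow> real"
  assumes [measurable]: "g \<in> borel_measurable borel" and g: "\<And>t. 0 \<le> g t" and a: "0 < a"
    and le: "(\<integral>\<^sup>+t. ennreal (g t / t) * indicator {a..b} t \<partial>lborel) \<le> ennreal c" and c: "0 \<le> c"
  shows "integrable lebesgue (\<lambda>y::'a::euclidean_space. indicator {a..b} (norm y) * g (norm y) / norm y ^ DIM('a))"
    and "integral\<^sup>L lebesgue (\<lambda>y::'a. indicator {a..b} (norm y) * g (norm y) / norm y ^ DIM('a))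
      \<le> DIM('a) * unit_ball_vol DIM('a) * c"
proof -
  have "(\<integral>\<^sup>+y. ennreal (indicator {a..b} (norm y) * g (norm y) / norm y ^ DIM('a)) \<partial>(lborel::'a measure))
      = ennreal (DIM('a) * unit_ball_vol DIM('a)) * (\<integral>\<^sup>+t. ennreal (g t / t) * indicator {a..b} t \<partial>lborel)"
    by (rule nn_integral_radial_annulus[OF _ a]) simp
  also have "\<dots> \<le> ennreal (DIM('a) * unit_ball_vol DIM('a) * c)"
    using mult_left_mono[OF le] c by (simp add: ennreal_mult')
  finally have "(\<integral>\<^sup>+y. ennreal (indicator {a..b} (norm y) * g (norm y) / norm y ^ DIM('a)) \<partial>(lborel::'a measure))
      \<le> ennreal (DIM('a) * unit_ball_vol DIM('a) * c)" .
  from integrable_lebesgue_nn_integral_le[OF _ _ this] g c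
  show "integrable lebesgue (\<lambda>y::'a. indicator {a..b} (norm y) * g (norm y) / norm y ^ DIM('a))"
    and "integral\<^sup>L lebesgue (\<lambda>y::'a. indicator {a..b} (norm y) * g (norm y) / norm y ^ DIM('a))
      \<le> DIM('a) * unit_ball_vol DIM('a) * c"
    by auto
qed

section \<open>One-dimensional integrals\<close>

lemma nn_integral_inverse_Icc:
  assumes "0 < a" "a \<le> b" "0 \<le> c"
  shows "(\<integral>\<^sup>+t. ennreal (c / t) * indicator {a..b} t \<partial>lborel) = ennreal (c * ln b - c * ln a)"
  using assms by (intro nn_integral_FTC_Icc) (auto intro!: derivative_eq_intros simp: field_simps)

lemma nn_integral_neg_ln_powr_diff_le:
  fixes \<rho> \<alpha> L :: real
  assumes r: "0 < \<rho>" "\<rho> < 1/10" and L: "L = - ln \<rho>" and a: "0 < \<alpha>" "\<alpha> < 1"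
  shows "(\<integral>\<^sup>+t. ennreal (((- ln t) powr (-\<alpha>) - L powr (-\<alpha>)) / t) * indicator {\<rho>..1/10} t \<partial>lborel)
     \<le> ennreal (L powr (1-\<alpha>) / (1-\<alpha>) - L powr (-\<alpha>) * (L - ln 10))"
proof -
  define F where "F t = - ((- ln t) powr (1-\<alpha>)) / (1-\<alpha>) - L powr (-\<alpha>) * ln t" for t
  have "(\<integral>\<^sup>+t. ennreal (((- ln t) powr (-\<alpha>) - L powr (-\<alpha>)) / t) * indicator {\<rho>..1/10} t \<partial>lborel)
     = ennreal (F (1/10) - F \<rho>)"
  proof (rule nn_integral_FTC_Icc)
    fix t assume t: "t \<in> {\<rho>..1/10}"
    then have t0: "0 < t" "t < 1" using r by auto
    then have lt: "0 < - ln t" by simp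
    have d0: "DERIV (\<lambda>t. - ln t) t :> - (1/t)" using t0 by (auto intro!: derivative_eq_intros)
    have d1: "DERIV (\<lambda>t. (- ln t) powr (1-\<alpha>)) t :> (1-\<alpha>) * (- ln t) powr ((1-\<alpha>) - of_nat 1) * (- (1/t))"
      by (rule DERIV_fun_powr[OF d0 lt])
    have d2: "DERIV (\<lambda>t. L powr (-\<alpha>) * ln t) t :> L powr (-\<alpha>) * (1/t)"
      using t0 by (auto intro!: derivative_eq_intros)
    have d3: "DERIV F t :> - ((1-\<alpha>) * (- ln t) powr ((1-\<alpha>) - of_nat 1) * (- (1/t))) / (1-\<alpha>) - L powr (-\<alpha>) * (1/t)"
      unfolding F_def by (intro DERIV_diff DERIV_cdivide DERIV_minus d1 d2)
    have "- ((1-\<alpha>) * (- ln t) powr ((1-\<alpha>) - of_nat 1) * (- (1/t))) / (1-\<alpha>) - L powr (-\<alpha>) * (1/t)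
        = ((- ln t) powr (-\<alpha>) - L powr (-\<alpha>)) / t" using a t0 by (simp add: field_simps)
    with d3 show "DERIV F t :> ((- ln t) powr (-\<alpha>) - L powr (-\<alpha>)) / t" by simp
    have "- ln t \<le> L" using t r L by auto
    then have "L powr (-\<alpha>) \<le> (- ln t) powr (-\<alpha>)" using lt a by (intro powr_mono2') auto
    then show "0 \<le> ((- ln t) powr (-\<alpha>) - L powr (-\<alpha>)) / t" using t0 by simp
  qed (use r in auto)
  also have "\<dots> \<le> ennreal (L powr (1-\<alpha>) / (1-\<alpha>) - L powr (-\<alpha>) * (L - ln 10))"
  proof (rule ennreal_leI)
    have "F (1/10) - F \<rho> = - ((ln 10) powr (1-\<alpha>)) / (1-\<alpha>) + L powr (1-\<alpha>) / (1-\<alpha>) - L powr (-\<alpha>) * (L - ln 10)"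
      unfolding F_def L by (simp add: ln_div algebra_simps)
    moreover have "0 \<le> (ln 10) powr (1-\<alpha>) / (1-\<alpha>)" using a by simp
    ultimately show "F (1/10) - F \<rho> \<le> L powr (1-\<alpha>) / (1-\<alpha>) - L powr (-\<alpha>) * (L - ln 10)" by linarith
  qed
  finally show ?thesis .
qed

section \<open>The function \<open>ell\<close>, the barrier and the measure \<open>\<mu>\<close>\<close>

lemma ell_nonneg: "0 \<le> ell t"
  by (simp add: ell_def)

lemma ell_eq_small: "0 < t \<Longrightarrow> t \<le> 1/10 \<Longrightarrow> ell t = inverse (- ln t)"
  by (simp add: ell_def min_def)

lemma ell_eq_large:
  assumes "1/10 \<le> t"
  shows "ell t = 1 / ln 10"
proof -
  have m: "min t (1/10) = 1/10" using assms by simp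
  have l: "ln (1/10::real) = - ln 10" by (simp add: ln_div)
  have "ell t = inverse \<bar>ln (1/10::real)\<bar>" unfolding ell_def m ..
  also have "\<dots> = 1 / ln 10" unfolding l by (simp add: divide_inverse)
  finally show ?thesis .
qed

lemma ell_pos:
  assumes "0 < t"
  shows "0 < ell t"
proof -
  have "ln (min t (1/10)) < 0" using assms by simp
  then show ?thesis by (simp add: ell_def)
qed

lemma ell_mono:
  assumes "0 \<le> s" "s \<le> t"
  shows "ell s \<le> ell t"
proof (cases "s = 0")
  case True
  then show ?thesis by (simp add: ell_def)
next
  case False
  let ?a = "min s (1/10)" and ?b = "min t (1/10)"
  have ab: "0 < ?a" "?a \<le> ?b" "?b \<le> 1/10" using False assms by auto
  have b0: "0 < ?b" using ab by linarith
  have "ln ?a \<le> ln ?b" using ab(1,2) b0 by simp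
  moreover have "ln ?b < 0" using b0 ab(3) by simp
  ultimately have "\<bar>ln ?b\<bar> \<le> \<bar>ln ?a\<bar>" "0 < \<bar>ln ?b\<bar>" by auto
  then show ?thesis unfolding ell_def by (simp add: le_imp_inverse_le)
qed

lemma ell_powr_eq_small:
  assumes "0 < t" "t \<le> 1/10"
  shows "ell t powr \<alpha> = (- ln t) powr (- \<alpha>)"
proof -
  have "ell t powr \<alpha> = inverse ((- ln t) powr \<alpha>)"
    unfolding ell_eq_small[OF assms] by (rule inverse_powr)
  then show ?thesis by (simp only: powr_minus)
qed

lemma ell_powr_le_one:
  assumes "0 \<le> \<alpha>" "0 \<le> t"
  shows "ell t powr \<alpha> \<le> 1"
proof -
  have "ell t \<le> ell (max t (1/10))" using assms by (intro ell_mono) auto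
  also have "\<dots> = 1 / ln 10" by (rule ell_eq_large) simp
  also have "\<dots> \<le> 1" using exp_le by (simp add: ln_ge_iff)
  finally show ?thesis using assms ell_nonneg by (intro powr_le1) auto
qed

lemma ell_square_powr:
  assumes "0 < \<rho>" "\<rho> < 1/10"
  shows "ell (\<rho>^2) powr \<beta> = 2 powr (- \<beta>) * (- ln \<rho>) powr (- \<beta>)"
proof -
  have "\<rho>^2 \<le> \<rho>" using mult_right_mono[of \<rho> 1 \<rho>] assms unfolding power2_eq_square by linarith
  then have "\<rho>^2 \<le> 1/10" using assms by linarith
  then have "ell (\<rho>^2) powr \<beta> = (- ln (\<rho>^2)) powr (- \<beta>)" using assms by (intro ell_powr_eq_small) auto
  also have "- ln (\<rho>^2) = 2 * - ln \<rho>" using assms by (simp add: ln_realpow)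
  also have "(2 * - ln \<rho>) powr (- \<beta>) = 2 powr (- \<beta>) * (- ln \<rho>) powr (- \<beta>)"
    by (rule powr_mult)
  finally show ?thesis .
qed

lemma ell_powr_square_gap:
  assumes rho: "0 < \<rho>" "\<rho> < 1/10" and alpha: "0 < \<alpha>"
  shows "0 < ell \<rho> powr \<alpha> - ell (\<rho>^2) powr \<alpha>"
    and "ell \<rho> powr \<alpha> - ell (\<rho>^2) powr \<alpha> \<le> \<alpha> * ell \<rho> powr \<alpha>"
proof -
  define P where "P = ell \<rho> powr \<alpha>"
  have P: "0 < P" unfolding P_def using ell_pos[OF rho(1)] by simp
  have gap: "ell \<rho> powr \<alpha> - ell (\<rho>^2) powr \<alpha> = P * (1 - 2 powr (- \<alpha>))"
    unfolding P_def using rho by (simp add: ell_square_powr ell_powr_eq_small algebra_simps)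
  have "2 powr (- \<alpha>) < 1" using alpha by (simp add: powr_less_one)
  then show "0 < ell \<rho> powr \<alpha> - ell (\<rho>^2) powr \<alpha>" unfolding gap using P by simp
  have "1 - \<alpha> * ln 2 \<le> exp (- \<alpha> * ln 2)" using exp_ge_add_one_self[of "- \<alpha> * ln 2"] by simp
  moreover have "\<alpha> * ln 2 \<le> \<alpha>" using alpha ln_le_minus_one[of 2] by (intro mult_left_le) auto
  ultimately have "1 - 2 powr (- \<alpha>) \<le> \<alpha>" by (simp add: powr_def)
  then have "P * (1 - 2 powr (- \<alpha>)) \<le> P * \<alpha>" using P by (intro mult_left_mono) auto
  then show "ell \<rho> powr \<alpha> - ell (\<rho>^2) powr \<alpha> \<le> \<alpha> * ell \<rho> powr \<alpha>"
    using gap unfolding P_def by (simp add: mult.commute)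
qed

lemma less_one_tenth_if_neg_ln_ge_10:
  fixes \<rho> :: real
  assumes "0 < \<rho>" "10 \<le> - ln \<rho>"
  shows "\<rho> < 1/10"
proof -
  have "ln \<rho> < ln (1/10)" using assms ln_le_minus_one[of 10] by (simp add: ln_div)
  then show ?thesis using assms by simp
qed

definition barrier_excess :: "real \<Rightarrow> real \<Rightarrow> real \<Rightarrow> real" where
  "barrier_excess \<alpha> \<rho> t = max 0 (ell t powr \<alpha> - ell \<rho> powr \<alpha>)"

lemma barrier_excess_nonneg: "0 \<le> barrier_excess \<alpha> \<rho> t"
  by (simp add: barrier_excess_def)

lemma barrier_excess_eq_0:
  assumes "0 \<le> \<alpha>" "0 \<le> t" "t \<le> \<rho>"
  shows "barrier_excess \<alpha> \<rho> t = 0"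
  using assms by (simp add: barrier_excess_def powr_mono2 ell_mono ell_nonneg)

lemma barrier_excess_div_le:
  assumes rho: "0 < \<rho>" "\<rho> < 1/10" and alpha: "0 < \<alpha>" and t: "0 < t" "t \<le> 2"
  shows "ennreal (barrier_excess \<alpha> \<rho> t / t)
    \<le> ennreal (((- ln t) powr (-\<alpha>) - (- ln \<rho>) powr (-\<alpha>)) / t) * indicator {\<rho>..1/10} t
      + ennreal (1 / t) * indicator {1/10..2} t"
proof -
  consider "t \<le> \<rho>" | "\<rho> \<le> t" "t \<le> 1/10" | "1/10 < t" by linarith
  then show ?thesis
  proof cases
    case 1
    then show ?thesis using t alpha by (simp add: barrier_excess_eq_0)
  next
    case 2
    have "ell \<rho> powr \<alpha> \<le> ell t powr \<alpha>"
      using 2 rho alpha by (intro powr_mono2 ell_mono ell_nonneg) auto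
    then have "barrier_excess \<alpha> \<rho> t = ell t powr \<alpha> - ell \<rho> powr \<alpha>"
      by (simp add: barrier_excess_def)
    also have "\<dots> = (- ln t) powr (-\<alpha>) - (- ln \<rho>) powr (-\<alpha>)"
      using 2 t rho by (simp add: ell_powr_eq_small)
    finally show ?thesis using 2 by (simp add: indicator_def)
  next
    case 3
    have "ell t powr \<alpha> - ell \<rho> powr \<alpha> \<le> 1"
      using ell_powr_le_one[of \<alpha> t] powr_ge_zero[of "ell \<rho>" \<alpha>] alpha t by linarith
    then have "barrier_excess \<alpha> \<rho> t \<le> 1" by (simp add: barrier_excess_def)
    then have "barrier_excess \<alpha> \<rho> t / t \<le> 1 / t" using t by (simp add: divide_right_mono)
    then show ?thesis using 3 t by (simp add: indicator_def ennreal_leI)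
  qed
qed

lemma neg_ln_powr_integral_bound:
  fixes L \<alpha> :: real
  assumes L: "1 \<le> L" and alpha: "0 < \<alpha>" "\<alpha> \<le> 1/2"
  shows "L powr (1-\<alpha>) / (1-\<alpha>) - L powr (-\<alpha>) * (L - ln 10) \<le> 2 * \<alpha> * L powr (1 - \<alpha>) + 9"
proof -
  have "L powr (1 - \<alpha>) = L powr 1 * L powr (-\<alpha>)" using powr_add[of L 1 "-\<alpha>"] by simp
  then have LP: "L powr (-\<alpha>) * L = L powr (1 - \<alpha>)" using L by simp
  have "L powr (1-\<alpha>) / (1-\<alpha>) - L powr (1-\<alpha>) = L powr (1-\<alpha>) * (\<alpha> / (1-\<alpha>))"
    using alpha by (simp add: field_simps)
  also have "\<dots> \<le> L powr (1-\<alpha>) * (2 * \<alpha>)"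
    using alpha by (intro mult_left_mono) (auto simp: field_simps)
  finally have "L powr (1-\<alpha>) / (1-\<alpha>) - L powr (-\<alpha>) * L \<le> 2 * \<alpha> * L powr (1 - \<alpha>)"
    unfolding LP by (simp add: mult.commute)
  moreover have "L powr (-\<alpha>) \<le> 1" using L alpha by (simp add: powr_minus inverse_le_1_iff ge_one_powr_ge_zero)
  then have "L powr (-\<alpha>) * ln 10 \<le> ln 10" by (simp add: mult_left_le_one_le)
  moreover have "ln (10::real) \<le> 9" using ln_le_minus_one[of 10] by simp
  moreover have "L powr (-\<alpha>) * (L - ln 10) = L powr (-\<alpha>) * L - L powr (-\<alpha>) * ln 10"
    by (simp add: right_diff_distrib)
  ultimately show ?thesis by linarith
qed

lemma nn_integral_barrier_excess_le:
  fixes \<alpha> \<rho> a :: real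
  assumes rho: "0 < \<rho>" "\<rho> < 1/10" and alpha: "0 < \<alpha>" "\<alpha> \<le> 1/2" and a: "0 < a"
  shows "(\<integral>\<^sup>+t. ennreal (barrier_excess \<alpha> \<rho> t / t) * indicator {a..2} t \<partial>lborel)
    \<le> ennreal (2 * \<alpha> * (- ln \<rho>) powr (1 - \<alpha>) + 28)"
proof -
  define L where "L = - ln \<rho>"
  have "ln \<rho> < ln (1/10)" using rho by simp
  then have "ln 10 < L" unfolding L_def by (simp add: ln_div)
  moreover have "1 \<le> ln (10::real)" using exp_le by (simp add: ln_ge_iff)
  ultimately have L: "1 \<le> L" by linarith
  have "(\<integral>\<^sup>+t. ennreal (barrier_excess \<alpha> \<rho> t / t) * indicator {a..2} t \<partial>lborel)
      \<le> (\<integral>\<^sup>+t. ennreal (((- ln t) powr (-\<alpha>) - L powr (-\<alpha>)) / t) * indicator {\<rho>..1/10} t \<partial>lborel)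
        + (\<integral>\<^sup>+t. ennreal (1 / t) * indicator {1/10..2} t \<partial>lborel)"
    using barrier_excess_div_le[OF rho alpha(1)] a unfolding L_def
    by (subst nn_integral_add[symmetric]) (auto simp: indicator_def intro!: nn_integral_mono)
  also have "\<dots> \<le> ennreal (2 * \<alpha> * L powr (1 - \<alpha>) + 9) + ennreal 19"
  proof (intro add_mono)
    show "(\<integral>\<^sup>+t. ennreal (((- ln t) powr (-\<alpha>) - L powr (-\<alpha>)) / t) * indicator {\<rho>..1/10} t \<partial>lborel)
        \<le> ennreal (2 * \<alpha> * L powr (1 - \<alpha>) + 9)"
      using nn_integral_neg_ln_powr_diff_le[OF rho L_def alpha(1)] alpha(2)
        ennreal_leI[OF neg_ln_powr_integral_bound[OF L alpha]]
      by (auto intro: order_trans)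
    have ln_20: "ln 2 - ln (1/10) \<le> (19::real)"
      using ln_mult[of 2 10] ln_le_minus_one[of 20] by (simp add: ln_div)
    show "(\<integral>\<^sup>+t. ennreal (1 / t) * indicator {1/10..2} t \<partial>lborel) \<le> ennreal 19"
      using nn_integral_inverse_Icc[of "1/10" 2 1] ennreal_leI[OF ln_20] by simp
  qed
  also have "\<dots> = ennreal (2 * \<alpha> * L powr (1 - \<alpha>) + 28)"
    using alpha by (subst ennreal_plus[symmetric]) auto
  finally show ?thesis unfolding L_def .
qed

lemma borel_measurable_ell [measurable]: "ell \<in> borel_measurable borel"
  unfolding ell_def by measurable

lemma emeasure_ell_measure:
  assumes "S \<in> sets lebesgue"
  shows "emeasure (ell_measure::'a::euclidean_space measure) S
    = (\<integral>\<^sup>+y. ennreal (ell (norm y) / norm y ^ DIM('a)) * indicator S y \<partial>lebesgue)"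
proof -
  have "(\<lambda>y::'a. ennreal (ell (norm y) / norm y ^ DIM('a))) \<in> borel_measurable lebesgue"
    by (intro measurable_completion) simp
  with assms show ?thesis unfolding ell_measure_def by (subst emeasure_density) auto
qed

lemma emeasure_ell_measure_annulus:
  assumes "0 < a"
  shows "emeasure (ell_measure::'a::euclidean_space measure) {y. a \<le> norm y \<and> norm y \<le> b}
    = ennreal (DIM('a) * unit_ball_vol DIM('a)) * (\<integral>\<^sup>+t. ennreal (ell t / t) * indicator {a..b} t \<partial>lborel)"
proof -
  let ?S = "{y::'a. a \<le> norm y \<and> norm y \<le> b}"
  have "?S \<in> sets borel" by measurable
  then have "emeasure (ell_measure::'a measure) ?S
      = (\<integral>\<^sup>+y. ennreal (ell (norm y) / norm y ^ DIM('a)) * indicator ?S y \<partial>lborel)"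
    by (simp add: emeasure_ell_measure nn_integral_completion)
  also have "\<dots> = (\<integral>\<^sup>+y. ennreal (indicator {a..b} (norm y) * ell (norm y) / norm y ^ DIM('a)) \<partial>(lborel::'a measure))"
    by (intro nn_integral_cong) (auto simp: indicator_def)
  also have "\<dots> = ennreal (DIM('a) * unit_ball_vol DIM('a)) * (\<integral>\<^sup>+t. ennreal (ell t / t) * indicator {a..b} t \<partial>lborel)"
    using assms by (intro nn_integral_radial_annulus) auto
  finally show ?thesis .
qed

lemma emeasure_ell_measure_annulus_ge:
  fixes \<rho> :: real
  assumes rho: "0 < \<rho>" and L: "10 \<le> - ln \<rho>"
  shows "ennreal (DIM('a) * unit_ball_vol DIM('a) / 4)
    \<le> emeasure (ell_measure :: 'a::euclidean_space measure) (ball 0 \<rho> - ball 0 (3 * \<rho>^2))"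
proof -
  define \<sigma> where "\<sigma> = real DIM('a) * unit_ball_vol DIM('a)"
  define L where "L = - ln \<rho>"
  define a where "a = 3 * \<rho>^2"
  have "\<rho> < 1/10" using rho L by (rule less_one_tenth_if_neg_ln_ge_10)
  then have "\<rho>^2 \<le> \<rho> / 10" using rho by (simp add: power2_eq_square)
  then have a: "0 < a" "a \<le> \<rho> / 2" "a \<le> 1/10" unfolding a_def using rho \<open>\<rho> < 1/10\<close> by auto
  have ln_a: "ln a = ln 3 - 2 * L" unfolding a_def L_def using rho by (simp add: ln_mult ln_realpow)
  have ln_rho2: "ln (\<rho>/2) = - L - ln 2" unfolding L_def using rho by (simp add: ln_div)
  define D where "D = 2 * L - ln 3"
  have ln_23: "ln 2 + ln 3 \<le> (5::real)" "0 < ln (2::real)" "0 < ln (3::real)"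
    using ln_mult[of 2 3] ln_le_minus_one[of 6] by simp_all
  have D_pos: "0 < D" using L ln_23 unfolding D_def L_def by linarith
  have D_le: "D \<le> 4 * (L - ln 2 - ln 3)" using L ln_23 unfolding D_def L_def by (smt (verit))
  have "ell a = inverse D" unfolding D_def using a ln_a by (simp add: ell_eq_small)
  then have "ell a * (ln (\<rho>/2) - ln a) = (L - ln 2 - ln 3) / D"
    unfolding ln_a ln_rho2 D_def by (simp add: divide_inverse mult.commute)
  also have "1/4 \<le> \<dots>" using D_pos D_le by (simp add: le_divide_eq)
  finally have "1/4 \<le> ell a * (ln (\<rho>/2) - ln a)" .
  then have "\<sigma> * (1/4) \<le> \<sigma> * (ell a * (ln (\<rho>/2) - ln a))"
    unfolding \<sigma>_def by (intro mult_left_mono) auto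
  then have "\<sigma> / 4 \<le> \<sigma> * (ell a * ln (\<rho>/2) - ell a * ln a)"
    by (simp add: right_diff_distrib)
  then have "ennreal (\<sigma> / 4) \<le> ennreal (\<sigma> * (ell a * ln (\<rho>/2) - ell a * ln a))"
    by (rule ennreal_leI)
  also have "\<dots> = ennreal \<sigma> * (\<integral>\<^sup>+t. ennreal (ell a / t) * indicator {a..\<rho>/2} t \<partial>lborel)"
    using a by (subst nn_integral_inverse_Icc) (auto simp: \<sigma>_def ell_nonneg ennreal_mult')
  also have "\<dots> \<le> ennreal \<sigma> * (\<integral>\<^sup>+t. ennreal (ell t / t) * indicator {a..\<rho>/2} t \<partial>lborel)"
    using a by (intro mult_left_mono nn_integral_mono)
      (auto simp: indicator_def ell_mono divide_right_mono intro!: ennreal_leI)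
  also have "\<dots> = emeasure ell_measure {y::'a. a \<le> norm y \<and> norm y \<le> \<rho>/2}"
    unfolding \<sigma>_def by (rule emeasure_ell_measure_annulus[OF a(1), symmetric])
  also have "\<dots> \<le> emeasure ell_measure (ball (0::'a) \<rho> - ball 0 (3 * \<rho>^2))"
  proof (rule emeasure_mono)
    show "ball 0 \<rho> - ball 0 (3 * \<rho>^2) \<in> sets (ell_measure::'a measure)"
      unfolding ell_measure_def by simp
  qed (use a rho in \<open>auto simp: a_def\<close>)
  finally show ?thesis unfolding \<sigma>_def .
qed

lemma emeasure_ell_measure_le_nn_integral:
  assumes S: "S \<in> sets lebesgue" "S \<subseteq> cball 0 r" and r: "0 < r"
  shows "ennreal (inverse (ell r)) * emeasure (ell_measure::'a::euclidean_space measure) S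
    \<le> (\<integral>\<^sup>+y. ennreal (indicator S y / norm y ^ DIM('a)) \<partial>lebesgue)"
proof -
  have [measurable]: "(\<lambda>y::'a. ennreal (ell (norm y) / norm y ^ DIM('a))) \<in> borel_measurable lebesgue"
    by (intro measurable_completion) simp
  have "ennreal (inverse (ell r)) * emeasure (ell_measure::'a measure) S
      = (\<integral>\<^sup>+y. ennreal (inverse (ell r)) * (ennreal (ell (norm y) / norm y ^ DIM('a)) * indicator S y) \<partial>lebesgue)"
    using S by (simp add: emeasure_ell_measure nn_integral_cmult)
  also have "\<dots> \<le> (\<integral>\<^sup>+y. ennreal (indicator S y / norm y ^ DIM('a)) \<partial>lebesgue)"
  proof (intro nn_integral_mono)
    fix y :: 'a
    show "ennreal (inverse (ell r)) * (ennreal (ell (norm y) / norm y ^ DIM('a)) * indicator S y)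
      \<le> ennreal (indicator S y / norm y ^ DIM('a))"
    proof (cases "y \<in> S")
      case True
      then have "ell (norm y) \<le> ell r" using S by (intro ell_mono) auto
      then have "inverse (ell r) * ell (norm y) \<le> 1" using ell_pos[OF r] by (simp add: field_simps)
      then have "(inverse (ell r) * ell (norm y)) / norm y ^ DIM('a) \<le> 1 / norm y ^ DIM('a)"
        by (rule divide_right_mono) simp
      then have "inverse (ell r) * (ell (norm y) / norm y ^ DIM('a)) \<le> 1 / norm y ^ DIM('a)"
        by simp
      with True show ?thesis
        using ell_pos[OF r] ell_nonneg by (simp add: ennreal_mult'[symmetric] ennreal_leI)
    qed simp
  qed
  finally show ?thesis .
qed

section \<open>Integrability of the integrand of \<open>L_K\<close>\<close>

lemma continuous_on_dini_modulus:
  assumes "dini_modulus \<omega>" "\<forall>y\<in>S. \<forall>z\<in>S. \<bar>u y - u z\<bar> \<le> \<omega> (dist y z)"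
  shows "continuous_on S u"
  unfolding continuous_on_iff
proof (intro ballI allI impI)
  fix x e assume x: "x \<in> S" and e: "(0::real) < e"
  have "(\<omega> \<longlongrightarrow> 0) (at_right 0)" using assms(1) by (simp add: dini_modulus_def)
  then have "eventually (\<lambda>t. dist (\<omega> t) 0 < e) (at_right 0)" using e by (simp add: tendsto_iff)
  then obtain b where b: "b > 0" "\<And>t. 0 < t \<Longrightarrow> t < b \<Longrightarrow> dist (\<omega> t) 0 < e"
    by (auto simp: eventually_at_right_field)
  have "dist (u x') (u x) < e" if "x' \<in> S" "dist x' x < b" for x'
  proof (cases "x' = x")
    case False
    then have "\<omega> (dist x' x) < e" using b(2)[of "dist x' x"] that by (auto simp: dist_real_def)
    moreover have "\<bar>u x' - u x\<bar> \<le> \<omega> (dist x' x)" using assms(2) x that by auto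
    ultimately show ?thesis by (simp add: dist_real_def)
  qed (use e in simp)
  with b(1) show "\<exists>d>0. \<forall>x'\<in>S. dist x' x < d \<longrightarrow> dist (u x') (u x) < e" by blast
qed

definition L_K_integrand :: "('a::euclidean_space \<Rightarrow> 'a \<Rightarrow> real) \<Rightarrow> ('a \<Rightarrow> real) \<Rightarrow> 'a \<Rightarrow> 'a \<Rightarrow> real" where
  "L_K_integrand K u x y = (u x - u y) / norm (y - x) ^ DIM('a) * K x (y - x)"

lemma L_K_eq_set_integral: "L_K K u x = set_lebesgue_integral lebesgue (ball x 1) (L_K_integrand K u x)"
  unfolding L_K_def L_K_integrand_def ..

lemma borel_measurable_L_K_integrand:
  fixes K :: "'a::euclidean_space \<Rightarrow> 'a \<Rightarrow> real" and u :: "'a \<Rightarrow> real"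
  assumes K_meas: "(\<lambda>(x, z). K x z) \<in> borel_measurable borel"
    and u: "set_integrable lebesgue (ball x 1) u"
  shows "(\<lambda>y. indicator (ball x 1) y * L_K_integrand K u x y) \<in> borel_measurable lebesgue"
proof -
  let ?B = "ball x 1"
  define ub where "ub y = indicator ?B y * u y" for y
  have ub: "ub \<in> borel_measurable lebesgue"
    using borel_measurable_integrable[OF u[unfolded set_integrable_def]] unfolding ub_def by simp
  have "(\<lambda>(x, z). K x z) \<in> borel_measurable (borel \<Otimes>\<^sub>M borel)" using K_meas by (simp add: borel_prod)
  moreover have "(\<lambda>y::'a. (x, y - x)) \<in> borel \<rightarrow>\<^sub>M borel \<Otimes>\<^sub>M borel" by measurable
  ultimately have "(\<lambda>y. K x (y - x)) \<in> borel_measurable borel"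
    using measurable_compose by fastforce
  then have "(\<lambda>y. K x (y - x)) \<in> borel_measurable lebesgue"
    by (intro measurable_completion) simp
  moreover have "(\<lambda>y. indicator ?B y :: real) \<in> borel_measurable lebesgue"
    by (intro measurable_completion borel_measurable_indicator) simp
  moreover have "(\<lambda>y. norm (y - x) ^ DIM('a)) \<in> borel_measurable lebesgue"
    by (intro measurable_completion) simp
  moreover have "indicator ?B y * L_K_integrand K u x y
      = indicator ?B y * ((u x - ub y) / norm (y - x) ^ DIM('a) * K x (y - x))" for y
    unfolding ub_def L_K_integrand_def by (simp add: indicator_def)
  ultimately show ?thesis using ub
    by (simp only:) (intro borel_measurable_times borel_measurable_divide borel_measurable_diff; simp)
qed

lemma abs_L_K_integrand_le:
  fixes K :: "'a::euclidean_space \<Rightarrow> 'a \<Rightarrow> real"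
  assumes "\<forall>z\<in>ball 0 1. 0 \<le> K x z \<and> K x z \<le> Lam" "y \<in> ball x 1"
  shows "\<bar>L_K_integrand K u x y\<bar> \<le> \<bar>u x - u y\<bar> / norm (y - x) ^ DIM('a) * Lam"
proof -
  have "0 \<le> K x (y - x)" "K x (y - x) \<le> Lam" using assms by (auto simp: dist_norm norm_minus_commute)
  then have "\<bar>u x - u y\<bar> * K x (y - x) / norm (y - x) ^ DIM('a) \<le> \<bar>u x - u y\<bar> * Lam / norm (y - x) ^ DIM('a)"
    by (intro divide_right_mono mult_left_mono) auto
  then show ?thesis unfolding L_K_integrand_def using \<open>0 \<le> K x (y - x)\<close> by (simp add: abs_mult)
qed

lemma abs_L_K_integrand_le_near:
  fixes K :: "'a::euclidean_space \<Rightarrow> 'a \<Rightarrow> real"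
  assumes K: "\<forall>z\<in>ball 0 1. 0 \<le> K x z \<and> K x z \<le> Lam"
    and dini: "\<forall>y\<in>cball x r. \<forall>z\<in>cball x r. \<bar>u y - u z\<bar> \<le> \<omega> (dist y z)"
    and y: "y \<in> ball x 1" "y \<noteq> x" "norm (y - x) \<le> r"
  shows "\<bar>L_K_integrand K u x y\<bar> \<le> Lam * (\<omega> (norm (y - x)) / norm (y - x)) / norm (y - x) ^ (DIM('a) - 1)"
proof -
  define d where "d = norm (y - x)"
  have d: "0 < d" using y(2) unfolding d_def by simp
  have "0 \<le> K x 0 \<and> K x 0 \<le> Lam" using K by simp
  then have "0 \<le> Lam" by linarith
  have "x \<in> cball x r" "y \<in> cball x r"
    using y(3) norm_ge_zero[of "y - x"] by (auto simp: dist_norm norm_minus_commute simp del: norm_ge_zero)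
  then have "\<bar>u x - u y\<bar> \<le> \<omega> (dist x y)" using dini by blast
  then have "\<bar>u x - u y\<bar> \<le> \<omega> d" unfolding d_def by (simp add: dist_norm norm_minus_commute)
  then have "\<bar>u x - u y\<bar> / d ^ DIM('a) * Lam \<le> \<omega> d / d ^ DIM('a) * Lam"
    using \<open>0 \<le> Lam\<close> d by (intro mult_right_mono divide_right_mono) auto
  moreover have "DIM('a) = Suc (DIM('a) - 1)" using DIM_positive by simp
  then have "d ^ DIM('a) = d * d ^ (DIM('a) - 1)" by (metis power_Suc)
  ultimately show ?thesis
    using abs_L_K_integrand_le[where K = K and u = u, OF K y(1)] d unfolding d_def[symmetric]
    by (simp add: field_simps)
qed

lemma abs_L_K_integrand_le_far:
  fixes K :: "'a::euclidean_space \<Rightarrow> 'a \<Rightarrow> real"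
  assumes K: "\<forall>z\<in>ball 0 1. 0 \<le> K x z \<and> K x z \<le> Lam"
    and y: "y \<in> ball x 1" and r: "0 < r" "r < norm (y - x)"
  shows "\<bar>L_K_integrand K u x y\<bar> \<le> Lam / r ^ DIM('a) * (\<bar>u x\<bar> + \<bar>u y\<bar>)"
proof -
  have "0 \<le> K x 0 \<and> K x 0 \<le> Lam" using K by simp
  then have "0 \<le> Lam" by linarith
  have "\<bar>u x - u y\<bar> / norm (y - x) ^ DIM('a) \<le> (\<bar>u x\<bar> + \<bar>u y\<bar>) / r ^ DIM('a)"
    using r by (intro frac_le power_mono) auto
  then have "\<bar>u x - u y\<bar> / norm (y - x) ^ DIM('a) * Lam \<le> (\<bar>u x\<bar> + \<bar>u y\<bar>) / r ^ DIM('a) * Lam"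
    using \<open>0 \<le> Lam\<close> by (rule mult_right_mono)
  then show ?thesis using abs_L_K_integrand_le[where K = K and u = u, OF K y] by (simp add: field_simps)
qed

lemma set_integrable_L_K_integrand:
  fixes K :: "'a::euclidean_space \<Rightarrow> 'a \<Rightarrow> real" and u :: "'a \<Rightarrow> real"
  assumes K_meas: "(\<lambda>(x, z). K x z) \<in> borel_measurable borel"
    and K: "\<forall>z\<in>ball 0 1. 0 \<le> K x z \<and> K x z \<le> Lam"
    and r: "0 < r" "r \<le> 1" "cball x r \<subseteq> U" and u_dini: "dini_loc U u"
    and u: "set_integrable lebesgue B u" "ball x 1 \<subseteq> B"
  shows "set_integrable lebesgue (ball x 1) (L_K_integrand K u x)"
proof -
  let ?N = "DIM('a)" and ?B = "ball x 1"
  obtain \<omega> where dini: "dini_modulus \<omega>" "\<forall>y\<in>cball x r. \<forall>z\<in>cball x r. \<bar>u y - u z\<bar> \<le> \<omega> (dist y z)"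
    using u_dini r(3) unfolding dini_loc_def by blast
  have u_B: "set_integrable lebesgue ?B u" by (rule set_integrable_subset[OF u(1) _ u(2)]) simp
  define g where "g y = indicator ?B y * L_K_integrand K u x y" for y
  have "0 \<le> K x 0 \<and> K x 0 \<le> Lam" using K by simp
  then have Lam: "0 \<le> Lam" by linarith
  \<comment> \<open>near \<open>x\<close> the Dini modulus tames the singularity, away from \<open>x\<close> the kernel is bounded\<close>
  define W where "W t = indicator {0<..<1} t * (\<omega> t / t)" for t :: real
  have W: "integrable lborel W" "0 \<le> W t" for t
    using dini(1) unfolding dini_modulus_def set_integrable_def W_def by (auto simp: indicator_def)
  define h1 where "h1 y = indicator {..r} (norm (y - x)) * (Lam * W (norm (y - x))) / norm (y - x) ^ (?N - 1)" for y
  define h2 where "h2 y = Lam / r ^ ?N * (indicator ?B y * \<bar>u x\<bar> + \<bar>indicator ?B y * u y\<bar>)" for y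
  have h1: "integrable lebesgue h1"
    unfolding h1_def using W Lam by (intro integrable_lebesgue_radial_singular) auto
  have "emeasure lebesgue ?B < \<infinity>"
    using emeasure_bounded_finite[of ?B] by (simp add: emeasure_completion)
  then have h2: "integrable lebesgue h2"
    using u_B unfolding h2_def set_integrable_def
    by (intro integrable_mult_right Bochner_Integration.integrable_add integrable_mult_left integrable_abs)
      (auto simp: integrable_indicator_iff)
  have h_nonneg: "0 \<le> h1 y" "0 \<le> h2 y" for y unfolding h1_def h2_def using W Lam r by simp_all
  have "\<bar>g y\<bar> \<le> h1 y + h2 y" for y
  proof (cases "y \<in> ?B \<and> y \<noteq> x")
    case False
    then show ?thesis using h_nonneg[of y] unfolding g_def L_K_integrand_def by auto
  next
    case True
    then have "0 < norm (y - x)" "norm (y - x) < 1" by (auto simp: dist_norm norm_minus_commute)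
    then have "\<bar>g y\<bar> \<le> (if norm (y - x) \<le> r then h1 y else h2 y)"
      using True abs_L_K_integrand_le_near[where K = K and u = u and x = x and y = y, OF K dini(2)]
        abs_L_K_integrand_le_far[where K = K and u = u and x = x and y = y, OF K _ r(1)]
      unfolding g_def h1_def h2_def W_def by (auto simp: indicator_def)
    then show ?thesis using h_nonneg[of y] by (auto split: if_splits)
  qed
  then have "integrable lebesgue g"
    using h1 h2 h_nonneg borel_measurable_L_K_integrand[OF K_meas u_B] unfolding g_def
    by (intro Bochner_Integration.integrable_bound[OF Bochner_Integration.integrable_add[OF h1 h2]])
      (auto intro!: AE_I2 simp: abs_of_nonneg)
  then show ?thesis unfolding set_integrable_def g_def by simp
qed

section \<open>The touching argument\<close>

lemma exists_touching_point:
  fixes u :: "'a::euclidean_space \<Rightarrow> real"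
  assumes s: "0 < s" "s \<le> R" and T: "0 < T"
    and cont: "continuous_on (cball 0 R) u" and nonneg: "\<forall>y\<in>cball 0 R. 0 \<le> u y"
    and x0: "norm x0 < s" "u x0 < T"
  shows "\<exists>xb. norm xb < 3/2 * s \<and> u xb < 2 * T \<and>
    (\<forall>y\<in>cball 0 R. u xb - u y \<le> T * (norm y ^ 2 - norm xb ^ 2) / s ^ 2)"
proof -
  \<comment> \<open>slide the paraboloid \<open>- T |y|^2 / s^2\<close> up until it touches the graph of \<open>u\<close>\<close>
  define w where "w y = u y + T * norm y ^ 2 / s ^ 2" for y
  have "continuous_on (cball 0 R) w" unfolding w_def by (intro continuous_intros cont) (use s in auto)
  moreover have "cball (0::'a) R \<noteq> {}" using s by simp
  ultimately obtain xb where xb: "xb \<in> cball 0 R" "\<And>y. y \<in> cball 0 R \<Longrightarrow> w xb \<le> w y"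
    using continuous_attains_inf[OF compact_cball] by blast
  have x0_R: "x0 \<in> cball 0 R" using x0 s by simp
  have "norm x0 ^ 2 \<le> s ^ 2" using x0 by (intro power_mono) auto
  then have "T * norm x0 ^ 2 / s ^ 2 \<le> T" using T s by (simp add: field_simps)
  then have w_xb: "w xb < 2 * T" using xb(2)[OF x0_R] x0 unfolding w_def by simp
  have u_xb: "0 \<le> u xb" using nonneg xb(1) by simp
  have "0 \<le> T * norm xb ^ 2 / s ^ 2" using T by simp
  then have "u xb < 2 * T" using w_xb unfolding w_def by simp
  moreover have "norm xb < 3/2 * s"
  proof -
    have "T * norm xb ^ 2 / s ^ 2 < 2 * T" using w_xb u_xb unfolding w_def by simp
    then have "norm xb ^ 2 < 2 * s ^ 2" using T s by (simp add: field_simps)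
    also have "\<dots> < (3/2 * s) ^ 2" using s by (simp add: power2_eq_square)
    finally show ?thesis by (rule power_less_imp_less_base) (use s in simp)
  qed
  moreover have "u xb - u y \<le> T * (norm y ^ 2 - norm xb ^ 2) / s ^ 2" if "y \<in> cball 0 R" for y
    using xb(2)[OF that] unfolding w_def by (simp add: diff_divide_distrib right_diff_distrib)
  ultimately show ?thesis by blast
qed

lemma exists_touching_point_of_barrier:
  fixes u :: "'a::euclidean_space \<Rightarrow> real"
  assumes rho: "0 < \<rho>" "\<rho> < 1/10" and alpha: "0 \<le> \<alpha>" and T: "0 < T"
    and u_dini: "dini_loc (ball 0 (2 * \<rho>^2)) u"
    and u_lower: "\<forall>x\<in>ball 0 (1 + 2 * \<rho>^2). - barrier_excess \<alpha> \<rho> (norm x) \<le> u x"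
    and x0: "x0 \<in> ball 0 (\<rho>^2)" "u x0 < T"
  shows "\<exists>xb. norm xb < 3/2 * \<rho>^2 \<and> u xb < 2 * T \<and>
    (\<forall>y\<in>cball 0 (19/10 * \<rho>^2). u xb - u y \<le> T * (norm y ^ 2 - norm xb ^ 2) / (\<rho>^2)^2)"
proof (rule exists_touching_point)
  define R where "R = 19/10 * \<rho>^2"
  have "0 < \<rho>^2" "\<rho>^2 \<le> \<rho> / 10" using rho by (auto simp: power2_eq_square)
  then have R: "\<rho>^2 \<le> R" "R \<le> \<rho>" "R < 2 * \<rho>^2" unfolding R_def by linarith+
  then have "cball 0 R \<subseteq> ball (0::'a) (2 * \<rho>^2)" by auto
  then obtain \<omega> where "dini_modulus \<omega>" "\<forall>y\<in>cball 0 R. \<forall>z\<in>cball 0 R. \<bar>u y - u z\<bar> \<le> \<omega> (dist y z)"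
    using u_dini unfolding dini_loc_def by blast
  then show "continuous_on (cball 0 R) u" by (rule continuous_on_dini_modulus)
  show "\<forall>y\<in>cball 0 R. 0 \<le> u y"
  proof
    fix y :: 'a assume "y \<in> cball 0 R"
    then have y: "norm y \<le> \<rho>" using R by simp
    then have "norm y < 1 + 2 * \<rho>^2" using rho \<open>0 < \<rho>^2\<close> by linarith
    then have "- barrier_excess \<alpha> \<rho> (norm y) \<le> u y" using u_lower by simp
    moreover have "barrier_excess \<alpha> \<rho> (norm y) = 0" using y alpha by (intro barrier_excess_eq_0) auto
    ultimately show "0 \<le> u y" by simp
  qed
  show "0 < \<rho>^2" "\<rho>^2 \<le> R" by fact+
qed (use T x0 in auto)

text \<open>
  T > 0 is the assumed violation of the claimed lower bound and xb the point where the paraboloid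
  u(xb) + T (|xb|^2 - |y|^2) / rho^4 touches u from below.
\<close>

locale touching_configuration =
  fixes lam Lam \<alpha> \<rho> T :: real
    and K :: "'a::euclidean_space \<Rightarrow> 'a \<Rightarrow> real" and u :: "'a \<Rightarrow> real" and xb :: 'a
  assumes lam: "0 < lam" "lam \<le> Lam"
    and alpha: "0 < \<alpha>" "\<alpha> \<le> 1/8"
    and rho: "0 < \<rho>" "10 \<le> - ln \<rho>"
    and T: "0 < T" "T \<le> \<alpha> * ell \<rho> powr \<alpha>"
    and K_bounds: "\<forall>z\<in>ball 0 1. lam \<le> K xb z \<and> K xb z \<le> Lam"
    and u_integrable: "set_integrable lebesgue (ball 0 (1 + 2 * \<rho>^2)) u"
    and u_lower: "\<forall>x\<in>ball 0 (1 + 2 * \<rho>^2). - barrier_excess \<alpha> \<rho> (norm x) \<le> u x"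
    and xb: "norm xb < 3/2 * \<rho>^2" "u xb < 2 * T"
    and touching: "\<forall>y\<in>cball 0 (19/10 * \<rho>^2). u xb - u y \<le> T * (norm y ^ 2 - norm xb ^ 2) / (\<rho>^2)^2"
begin

definition near_bound :: "'a \<Rightarrow> real" where
  "near_bound y = indicator {..4 * \<rho>^2} (norm (y - xb)) * (4 * Lam * T / \<rho>^2) / norm (y - xb) ^ (DIM('a) - 1)"

definition far_bound :: "'a \<Rightarrow> real" where
  "far_bound y = indicator {19/10 * \<rho>^2..2} (norm y)
     * (Lam * 5 ^ DIM('a) * (2 * T + barrier_excess \<alpha> \<rho> (norm y))) / norm y ^ DIM('a)"

definition good_set :: "'a set" where
  "good_set = {x. ell \<rho> powr \<alpha> / 2 \<le> u x} \<inter> (ball 0 \<rho> - ball 0 (3 * \<rho>^2))"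

definition good_bound :: "'a \<Rightarrow> real" where
  "good_bound y = lam * ell \<rho> powr \<alpha> / 2 ^ (DIM('a) + 2) * indicator good_set y / norm y ^ DIM('a)"

lemma rho_small: "\<rho> < 1/10" "\<rho>^2 \<le> \<rho> / 10"
proof -
  show "\<rho> < 1/10" using rho by (rule less_one_tenth_if_neg_ln_ge_10)
  then show "\<rho>^2 \<le> \<rho> / 10" using rho by (simp add: power2_eq_square)
qed

lemma Lam_pos: "0 < Lam"
  using lam by simp

lemma ell_rho_powr: "ell \<rho> powr \<alpha> = (- ln \<rho>) powr (- \<alpha>)"
  using rho rho_small by (intro ell_powr_eq_small) auto

lemma neg_ln_rho_powr: "(- ln \<rho>) powr (1 - \<alpha>) = - ln \<rho> * ell \<rho> powr \<alpha>"
proof -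
  have "(- ln \<rho>) powr (1 - \<alpha>) = (- ln \<rho>) powr 1 * (- ln \<rho>) powr (- \<alpha>)"
    using powr_add[of "- ln \<rho>" 1 "- \<alpha>"] by simp
  then show ?thesis using rho by (simp add: ell_rho_powr)
qed

lemma good_set_subset: "good_set \<subseteq> {y. 3 * \<rho>^2 \<le> norm y \<and> norm y < \<rho>}"
  unfolding good_set_def by auto

lemma good_set_subset_ball: "good_set \<subseteq> ball xb 1"
proof
  fix y assume "y \<in> good_set"
  then have "norm y < \<rho>" using good_set_subset by auto
  moreover have "norm (y - xb) \<le> norm y + norm xb" by (rule norm_triangle_ineq4)
  ultimately have "norm (y - xb) < 1" using xb rho_small by linarith
  then show "y \<in> ball xb 1" by (simp add: dist_norm norm_minus_commute)
qed

lemma ball_xb_subset: "ball xb 1 \<subseteq> ball 0 (1 + 2 * \<rho>^2)"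
proof
  fix y assume "y \<in> ball xb 1"
  then have "norm (y - xb) < 1" by (simp add: dist_norm norm_minus_commute)
  moreover have "norm y \<le> norm xb + norm (y - xb)" by (metis add.commute diff_add_cancel norm_triangle_ineq)
  moreover have "0 \<le> \<rho>^2" by simp
  ultimately have "norm y < 1 + 2 * \<rho>^2" using xb by linarith
  then show "y \<in> ball 0 (1 + 2 * \<rho>^2)" by simp
qed

lemma near_bound_nonneg: "0 \<le> near_bound y"
  unfolding near_bound_def using Lam_pos T by simp

lemma integrand_le:
  assumes y: "y \<in> ball xb 1" "y \<noteq> xb" and D: "u xb - u y \<le> D" "0 \<le> D"
  shows "L_K_integrand K u xb y \<le> D / norm (y - xb) ^ DIM('a) * Lam"
proof -
  have K: "lam \<le> K xb (y - xb)" "K xb (y - xb) \<le> Lam"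
    using K_bounds y(1) by (auto simp: dist_norm norm_minus_commute)
  show ?thesis
  proof (cases "0 \<le> u xb - u y")
    case True
    then show ?thesis unfolding L_K_integrand_def
      using D K lam y(2) by (intro mult_mono divide_right_mono) auto
  next
    case False
    then have "L_K_integrand K u xb y \<le> 0" unfolding L_K_integrand_def
      using K lam by (intro mult_nonpos_nonneg divide_nonpos_nonneg) auto
    moreover have "0 \<le> D / norm (y - xb) ^ DIM('a) * Lam" using D Lam_pos by simp
    ultimately show ?thesis by linarith
  qed
qed

lemma touching_increment_le:
  assumes y: "norm y \<le> 19/10 * \<rho>^2"
  shows "u xb - u y \<le> 4 * T * norm (y - xb) / \<rho>^2"
proof -
  define r where "r = norm (y - xb)"
  have r: "0 \<le> r" "norm y \<le> norm xb + r"
    using norm_triangle_ineq2[of y xb] unfolding r_def by auto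
  \<comment> \<open>the touching paraboloid turns a quadratic bound into one linear in \<open>r\<close>\<close>
  have "norm y ^ 2 - norm xb ^ 2 \<le> r * (7/2 * \<rho>^2)"
  proof (cases "norm xb \<le> norm y")
    case True
    have "norm y ^ 2 - norm xb ^ 2 = (norm y - norm xb) * (norm y + norm xb)"
      by (simp add: power2_eq_square algebra_simps)
    also have "\<dots> \<le> r * (7/2 * \<rho>^2)" using True r y xb by (intro mult_mono) auto
    finally show ?thesis .
  next
    case False
    then have "norm y ^ 2 \<le> norm xb ^ 2" by (intro power_mono) auto
    moreover have "0 \<le> r * (7/2 * \<rho>^2)" using r by simp
    ultimately show ?thesis by linarith
  qed
  then have "T * (norm y ^ 2 - norm xb ^ 2) / (\<rho>^2)^2 \<le> T * (r * (7/2 * \<rho>^2)) / (\<rho>^2)^2"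
    using T by (intro divide_right_mono mult_left_mono) auto
  then have "u xb - u y \<le> T * (r * (7/2 * \<rho>^2)) / (\<rho>^2)^2"
    using touching y by force
  also have "\<dots> \<le> 4 * T * r / \<rho>^2"
    using T r rho by (simp add: field_simps power2_eq_square)
  finally show ?thesis unfolding r_def .
qed

lemma integrand_le_near_bound:
  assumes y: "y \<in> ball xb 1" "norm y \<le> 19/10 * \<rho>^2"
  shows "L_K_integrand K u xb y \<le> near_bound y"
proof (cases "y = xb")
  case True
  then show ?thesis using near_bound_nonneg[of y] by (simp add: L_K_integrand_def)
next
  case False
  define r where "r = norm (y - xb)"
  have r: "0 < r" using False unfolding r_def by simp
  have "DIM('a) = Suc (DIM('a) - 1)" using DIM_positive by simp
  then have rN: "r ^ DIM('a) = r * r ^ (DIM('a) - 1)" by (metis power_Suc)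
  have "L_K_integrand K u xb y \<le> 4 * T * r / \<rho>^2 / r ^ DIM('a) * Lam"
    using integrand_le[OF y(1) False touching_increment_le[OF y(2)]] T r rho unfolding r_def by simp
  also have "\<dots> = near_bound y"
  proof -
    have "r \<le> norm y + norm xb" unfolding r_def by (rule norm_triangle_ineq4)
    then have "r \<le> 4 * \<rho>^2" using y(2) xb zero_le_power2[of \<rho>] by linarith
    then show ?thesis unfolding near_bound_def r_def[symmetric] using r rN by (simp add: field_simps)
  qed
  finally show ?thesis .
qed

lemma far_bound_nonneg: "0 \<le> far_bound y"
  unfolding far_bound_def using Lam_pos T barrier_excess_nonneg[of \<alpha> \<rho> "norm y"] by simp

lemma integrand_le_far:
  assumes y: "y \<in> ball xb 1" "19/10 * \<rho>^2 < norm y" and D: "u xb - u y \<le> D" "0 \<le> D"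
  shows "L_K_integrand K u xb y \<le> D * (Lam * 5 ^ DIM('a)) / norm y ^ DIM('a)"
proof -
  have "norm y \<le> norm xb + norm (y - xb)" by (metis add.commute diff_add_cancel norm_triangle_ineq)
  then have r: "norm y / 5 \<le> norm (y - xb)" using y(2) xb zero_le_power2[of \<rho>] by linarith
  have ny: "0 < norm y" using y(2) zero_le_power2[of \<rho>] by linarith
  then have r_pos: "0 < norm (y - xb)" using r by linarith
  have "(norm y / 5) ^ DIM('a) \<le> norm (y - xb) ^ DIM('a)" using r ny by (intro power_mono) auto
  then have "D / norm (y - xb) ^ DIM('a) \<le> D / (norm y / 5) ^ DIM('a)"
    using D ny r_pos by (intro divide_left_mono mult_pos_pos) auto
  also have "\<dots> = D * 5 ^ DIM('a) / norm y ^ DIM('a)" by (simp add: power_divide)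
  finally have "D / norm (y - xb) ^ DIM('a) * Lam \<le> D * 5 ^ DIM('a) / norm y ^ DIM('a) * Lam"
    using Lam_pos by (intro mult_right_mono) auto
  moreover have "L_K_integrand K u xb y \<le> D / norm (y - xb) ^ DIM('a) * Lam"
    using integrand_le[OF y(1) _ D] r_pos by force
  moreover have "D * 5 ^ DIM('a) / norm y ^ DIM('a) * Lam = D * (Lam * 5 ^ DIM('a)) / norm y ^ DIM('a)"
    by simp
  ultimately show ?thesis by linarith
qed

lemma integrand_le_good_bound:
  assumes y: "y \<in> good_set"
  shows "L_K_integrand K u xb y \<le> - good_bound y"
proof -
  define P where "P = ell \<rho> powr \<alpha>"
  have P: "0 \<le> P" unfolding P_def by simp
  have "\<alpha> * P \<le> 1/8 * P" using alpha P by (intro mult_right_mono) auto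
  then have "2 * T \<le> P / 4" using T unfolding P_def by linarith
  moreover have "P / 2 \<le> u y" using y unfolding good_set_def P_def by simp
  ultimately have D: "u xb - u y \<le> - (P / 4)" using xb by linarith
  have y_norm: "3 * \<rho>^2 \<le> norm y" using y good_set_subset by auto
  have r: "norm (y - xb) \<le> 2 * norm y"
    using norm_triangle_ineq4[of y xb] y_norm xb zero_le_power2[of \<rho>] by linarith
  have "0 < \<rho>^2" using rho by simp
  then have r_pos: "0 < norm (y - xb)" using norm_triangle_ineq3[of y xb] y_norm xb by linarith
  have y_pos: "0 < norm y" using y_norm \<open>0 < \<rho>^2\<close> by linarith
  have K: "lam \<le> K xb (y - xb)" using K_bounds good_set_subset_ball y by (auto simp: dist_norm norm_minus_commute)
  have "L_K_integrand K u xb y = (u xb - u y) * K xb (y - xb) / norm (y - xb) ^ DIM('a)"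
    unfolding L_K_integrand_def by simp
  also have "\<dots> \<le> - (P / 4) * lam / norm (y - xb) ^ DIM('a)"
  proof (intro divide_right_mono)
    have "(u xb - u y) * K xb (y - xb) \<le> (u xb - u y) * lam" using K D P by (intro mult_left_mono_neg) auto
    also have "\<dots> \<le> - (P / 4) * lam" using D lam by (intro mult_right_mono) auto
    finally show "(u xb - u y) * K xb (y - xb) \<le> - (P / 4) * lam" .
  qed simp
  also have "\<dots> \<le> - (P / 4) * lam / (2 * norm y) ^ DIM('a)"
  proof -
    have "norm (y - xb) ^ DIM('a) \<le> (2 * norm y) ^ DIM('a)" using r by (intro power_mono) auto
    then have "P / 4 * lam / (2 * norm y) ^ DIM('a) \<le> P / 4 * lam / norm (y - xb) ^ DIM('a)"
      using r_pos P lam y_pos by (intro divide_left_mono mult_pos_pos) auto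
    then show ?thesis by simp
  qed
  also have "\<dots> = - good_bound y"
    using y unfolding good_bound_def P_def
    by (simp add: power_mult_distrib power_add field_simps)
  finally show ?thesis .
qed

lemma integrand_le_bounds:
  "indicator (ball xb 1) y * L_K_integrand K u xb y \<le> near_bound y + far_bound y - good_bound y"
proof (cases "y \<in> ball xb 1")
  case False
  then have "y \<notin> good_set" using good_set_subset_ball by auto
  then show ?thesis using False near_bound_nonneg[of y] far_bound_nonneg[of y]
    by (simp add: good_bound_def)
next
  case y: True
  show ?thesis
  proof (cases "norm y \<le> 19/10 * \<rho>^2")
    case True
    have "y \<notin> good_set"
    proof
      assume "y \<in> good_set"
      then have "3 * \<rho>^2 \<le> norm y" using good_set_subset by auto
      moreover have "0 < \<rho>^2" using rho by simp
      ultimately show False using True by linarith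
    qed
    then show ?thesis using y True integrand_le_near_bound[OF y True] far_bound_nonneg[of y]
      by (simp add: good_bound_def)
  next
    case False
    then have y_far: "19/10 * \<rho>^2 < norm y" by simp
    show ?thesis
    proof (cases "y \<in> good_set")
      case True
      then show ?thesis
        using y integrand_le_good_bound[OF True] near_bound_nonneg[of y] far_bound_nonneg[of y] by simp
    next
      case False
      have "norm y < 1 + 2 * \<rho>^2" using ball_xb_subset y by auto
      then have y_le_2: "norm y \<le> 2" using rho_small by linarith
      have "- barrier_excess \<alpha> \<rho> (norm y) \<le> u y" using u_lower ball_xb_subset y by auto
      then have D: "u xb - u y \<le> 2 * T + barrier_excess \<alpha> \<rho> (norm y)" using xb by linarith
      have "L_K_integrand K u xb y \<le> far_bound y"
        using integrand_le_far[OF y y_far D] y_far y_le_2 T barrier_excess_nonneg[of \<alpha> \<rho> "norm y"]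
        unfolding far_bound_def by (simp add: field_simps)
      then show ?thesis using y False near_bound_nonneg[of y] by (simp add: good_bound_def)
    qed
  qed
qed

lemma T_le_alpha_neg_ln_rho_ell_powr: "T \<le> \<alpha> * (- ln \<rho> * ell \<rho> powr \<alpha>)"
proof -
  have "1 * ell \<rho> powr \<alpha> \<le> - ln \<rho> * ell \<rho> powr \<alpha>"
    using rho by (intro mult_right_mono) auto
  then have "\<alpha> * ell \<rho> powr \<alpha> \<le> \<alpha> * (- ln \<rho> * ell \<rho> powr \<alpha>)"
    using alpha by (intro mult_left_mono) auto
  then show ?thesis using T by linarith
qed

lemma integral_near_bound:
  shows "integrable lebesgue near_bound"
    and "integral\<^sup>L lebesgue near_bound
      \<le> 16 * \<alpha> * (Lam * (DIM('a) * unit_ball_vol DIM('a)) * 5 ^ DIM('a)) * (- ln \<rho>) powr (1 - \<alpha>)"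
proof -
  let ?\<sigma> = "real DIM('a) * unit_ball_vol DIM('a)" and ?C = "4 * Lam * T / \<rho>^2"
  have C: "0 \<le> ?C" using Lam_pos T by simp
  have meas [measurable]: "near_bound \<in> borel_measurable borel" unfolding near_bound_def by measurable
  have "(\<integral>\<^sup>+y. ennreal (near_bound y) \<partial>lborel)
      = (\<integral>\<^sup>+z. ennreal (indicator {..4 * \<rho>^2} (norm z) * ?C / norm z ^ (DIM('a) - 1)) \<partial>(lborel::'a measure))"
    unfolding near_bound_def
    by (rule nn_integral_lborel_translate[where h = "\<lambda>z. ennreal (indicator {..4 * \<rho>^2} (norm z) * ?C / norm z ^ (DIM('a) - 1))"])
      measurable
  also have "\<dots> \<le> ennreal ?\<sigma> * (\<integral>\<^sup>+t. ennreal ?C * indicator {0..4 * \<rho>^2} t \<partial>lborel)"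
    by (rule nn_integral_radial_singular_le) (use C in auto)
  also have "\<dots> = ennreal ?\<sigma> * (ennreal ?C * ennreal (4 * \<rho>^2))"
    by (simp add: nn_integral_cmult_indicator)
  also have "\<dots> = ennreal (?\<sigma> * (?C * (4 * \<rho>^2)))"
    using C by (simp only: ennreal_mult'[symmetric] of_nat_0_le_iff mult_nonneg_nonneg unit_ball_vol_nonneg)
  finally have nn: "(\<integral>\<^sup>+y. ennreal (near_bound y) \<partial>lborel) \<le> ennreal (?\<sigma> * (?C * (4 * \<rho>^2)))" .
  have "0 \<le> ?\<sigma> * (?C * (4 * \<rho>^2))" using C by (intro mult_nonneg_nonneg) auto
  note near = integrable_lebesgue_nn_integral_le[OF meas near_bound_nonneg nn this]
  then show "integrable lebesgue near_bound" by simp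
  have "?\<sigma> * (?C * (4 * \<rho>^2)) = 16 * (Lam * ?\<sigma>) * T" using rho by (simp add: field_simps)
  also have "\<dots> \<le> 16 * (Lam * ?\<sigma> * 5 ^ DIM('a)) * (\<alpha> * (- ln \<rho> * ell \<rho> powr \<alpha>))"
  proof -
    have "Lam * ?\<sigma> * 1 \<le> Lam * ?\<sigma> * 5 ^ DIM('a)" using Lam_pos by (intro mult_left_mono) auto
    then have "16 * (Lam * ?\<sigma>) \<le> 16 * (Lam * ?\<sigma> * 5 ^ DIM('a))" by simp
    then show ?thesis by (rule mult_mono[OF _ T_le_alpha_neg_ln_rho_ell_powr]) (use Lam_pos T in auto)
  qed
  finally show "integral\<^sup>L lebesgue near_bound
      \<le> 16 * \<alpha> * (Lam * ?\<sigma> * 5 ^ DIM('a)) * (- ln \<rho>) powr (1 - \<alpha>)"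
    using near(2) unfolding neg_ln_rho_powr by (simp add: mult_ac)
qed

lemma far_log_term_le: "2 * T * (ln 2 - ln (19/10 * \<rho>^2)) \<le> 6 * \<alpha> * (- ln \<rho>) powr (1 - \<alpha>)"
proof -
  have "ln (\<rho>^2) \<le> ln (19/10 * \<rho>^2)" using rho by (intro ln_mono) auto
  moreover have "ln 2 \<le> (1::real)" using ln_le_minus_one[of 2] by simp
  ultimately have "ln 2 - ln (19/10 * \<rho>^2) \<le> 3 * - ln \<rho>" using rho by (simp add: ln_realpow)
  then have "2 * T * (ln 2 - ln (19/10 * \<rho>^2)) \<le> 2 * T * (3 * - ln \<rho>)" using T by (intro mult_left_mono) auto
  also have "\<dots> \<le> 6 * \<alpha> * (- ln \<rho>) powr (1 - \<alpha>)"
  proof -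
    have "0 \<le> - ln \<rho>" using rho by linarith
    then have "T * - ln \<rho> \<le> \<alpha> * ell \<rho> powr \<alpha> * - ln \<rho>" using T by (intro mult_right_mono) auto
    then show ?thesis unfolding neg_ln_rho_powr by (simp add: mult_ac)
  qed
  finally show ?thesis .
qed

lemma integral_far_bound:
  shows "integrable lebesgue far_bound"
    and "integral\<^sup>L lebesgue far_bound
      \<le> (Lam * (DIM('a) * unit_ball_vol DIM('a)) * 5 ^ DIM('a)) * (8 * \<alpha> * (- ln \<rho>) powr (1 - \<alpha>) + 28)"
proof -
  let ?\<sigma> = "real DIM('a) * unit_ball_vol DIM('a)" and ?c = "Lam * 5 ^ DIM('a)"
    and ?R = "19/10 * \<rho>^2" and ?Q = "(- ln \<rho>) powr (1 - \<alpha>)" and ?E = "barrier_excess \<alpha> \<rho>"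
  have c: "0 \<le> ?c" using Lam_pos by simp
  have R: "0 < ?R" "?R \<le> 2" using rho rho_small by auto
  have [measurable]: "?E \<in> borel_measurable borel" unfolding barrier_excess_def by measurable
  have c2T: "0 \<le> ?c * (2 * T)" using c T by simp
  then have "(\<integral>\<^sup>+t. ennreal (?c * (2 * T) / t) * indicator {?R..2} t \<partial>lborel)
      = ennreal (?c * (2 * T) * ln 2 - ?c * (2 * T) * ln ?R)"
    using R by (intro nn_integral_inverse_Icc) auto
  also have "\<dots> = ennreal (?c * (2 * T * (ln 2 - ln ?R)))" by (simp add: algebra_simps)
  finally have "(\<integral>\<^sup>+t. ennreal (?c * (2 * T) / t) * indicator {?R..2} t \<partial>lborel)
      \<le> ennreal (?c * (2 * T * (ln 2 - ln ?R)))" by simp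
  moreover have "0 \<le> ?c * (2 * T * (ln 2 - ln ?R))" using c T R by simp
  ultimately have const: "integrable lebesgue (\<lambda>y::'a. indicator {?R..2} (norm y) * (?c * (2 * T)) / norm y ^ DIM('a))"
    "integral\<^sup>L lebesgue (\<lambda>y::'a. indicator {?R..2} (norm y) * (?c * (2 * T)) / norm y ^ DIM('a))
      \<le> ?\<sigma> * (?c * (2 * T * (ln 2 - ln ?R)))"
    using integral_radial_annulus_le[where 'a = 'a and g = "\<lambda>_. ?c * (2 * T)", OF _ _ R(1)] c2T by auto
  have "ennreal (?c * ?E t / t) * indicator {?R..2} t = ennreal ?c * (ennreal (?E t / t) * indicator {?R..2} t)"
    for t using ennreal_mult'[OF c, of "?E t / t"] by (simp add: mult.assoc)
  then have "(\<integral>\<^sup>+t. ennreal (?c * ?E t / t) * indicator {?R..2} t \<partial>lborel)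
      = ennreal ?c * (\<integral>\<^sup>+t. ennreal (?E t / t) * indicator {?R..2} t \<partial>lborel)"
    by (simp only:) (rule nn_integral_cmult, measurable)
  also have "\<dots> \<le> ennreal ?c * ennreal (2 * \<alpha> * ?Q + 28)"
    using nn_integral_barrier_excess_le[of \<rho> \<alpha> ?R] rho rho_small alpha R by (intro mult_left_mono) auto
  also have "\<dots> = ennreal (?c * (2 * \<alpha> * ?Q + 28))" using c by (simp add: ennreal_mult')
  finally have excess: "integrable lebesgue (\<lambda>y::'a. indicator {?R..2} (norm y) * (?c * ?E (norm y)) / norm y ^ DIM('a))"
    "integral\<^sup>L lebesgue (\<lambda>y::'a. indicator {?R..2} (norm y) * (?c * ?E (norm y)) / norm y ^ DIM('a))
      \<le> ?\<sigma> * (?c * (2 * \<alpha> * ?Q + 28))"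
    using integral_radial_annulus_le[where 'a = 'a and g = "\<lambda>t. ?c * ?E t", OF _ _ R(1)] c alpha barrier_excess_nonneg
    by auto
  have far: "far_bound = (\<lambda>y. indicator {?R..2} (norm y) * (?c * (2 * T)) / norm y ^ DIM('a)
      + indicator {?R..2} (norm y) * (?c * ?E (norm y)) / norm y ^ DIM('a))"
    unfolding far_bound_def by (auto simp: add_divide_distrib distrib_left distrib_right)
  show "integrable lebesgue far_bound" unfolding far using const excess by simp
  have "?\<sigma> * (?c * (2 * T * (ln 2 - ln ?R))) \<le> ?\<sigma> * (?c * (6 * \<alpha> * ?Q))"
    using far_log_term_le c by (intro mult_left_mono) auto
  then show "integral\<^sup>L lebesgue far_bound \<le> (Lam * ?\<sigma> * 5 ^ DIM('a)) * (8 * \<alpha> * ?Q + 28)"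
    unfolding far using const excess by (simp add: algebra_simps)
qed

lemma good_set_measurable: "good_set \<in> sets lebesgue"
proof -
  define ub where "ub x = indicator (ball 0 (1 + 2 * \<rho>^2)) x * u x" for x
  have "ub \<in> borel_measurable lebesgue"
    using borel_measurable_integrable[OF u_integrable[unfolded set_integrable_def]] unfolding ub_def by simp
  then have level: "{x \<in> space lebesgue. ell \<rho> powr \<alpha> / 2 \<le> ub x} \<in> sets lebesgue"
    unfolding borel_measurable_iff_ge by blast
  have "\<rho> \<le> 1 + 2 * \<rho>^2" using rho_small zero_le_power2[of \<rho>] by linarith
  then have "ball 0 \<rho> \<subseteq> ball (0::'a) (1 + 2 * \<rho>^2)" by (rule subset_ball)
  then have eq: "good_set = {x \<in> space lebesgue. ell \<rho> powr \<alpha> / 2 \<le> ub x} \<inter> (ball 0 \<rho> - ball 0 (3 * \<rho>^2))"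
    unfolding good_set_def ub_def by (auto simp: indicator_def)
  have "ball 0 \<rho> - ball (0::'a) (3 * \<rho>^2) \<in> sets lebesgue" by simp
  with level show ?thesis unfolding eq by (rule sets.Int)
qed

lemma integrable_good_set_div_norm_pow:
  "integrable lebesgue (\<lambda>y. indicator good_set y / norm y ^ DIM('a))"
proof (rule Bochner_Integration.integrable_bound)
  have "emeasure lebesgue (ball (0::'a) \<rho>) < \<infinity>"
    using emeasure_bounded_finite[of "ball (0::'a) \<rho>"] by (simp add: emeasure_completion)
  then show "integrable lebesgue (\<lambda>y. 1 / (3 * \<rho>^2) ^ DIM('a) * indicator (ball (0::'a) \<rho>) y)"
    by (intro integrable_mult_right) (simp add: integrable_indicator_iff)
  have "(\<lambda>y::'a. norm y ^ DIM('a)) \<in> borel_measurable lebesgue" by (intro measurable_completion) simp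
  then show "(\<lambda>y. indicator good_set y / norm y ^ DIM('a)) \<in> borel_measurable lebesgue"
    using good_set_measurable by (intro borel_measurable_divide borel_measurable_indicator) auto
  show "AE y in lebesgue. norm (indicator good_set y / norm y ^ DIM('a))
      \<le> norm (1 / (3 * \<rho>^2) ^ DIM('a) * indicator (ball (0::'a) \<rho>) y)"
  proof (intro AE_I2)
    fix y :: 'a
    show "norm (indicator good_set y / norm y ^ DIM('a)) \<le> norm (1 / (3 * \<rho>^2) ^ DIM('a) * indicator (ball (0::'a) \<rho>) y)"
    proof (cases "y \<in> good_set")
      case True
      then have y: "3 * \<rho>^2 \<le> norm y" "norm y < \<rho>" using good_set_subset by auto
      have "(3 * \<rho>^2) ^ DIM('a) \<le> norm y ^ DIM('a)" using y rho by (intro power_mono) auto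
      moreover have "0 < norm y" using y rho by (smt (verit) zero_less_power)
      ultimately have "1 / norm y ^ DIM('a) \<le> 1 / (3 * \<rho>^2) ^ DIM('a)"
        using rho by (intro divide_left_mono mult_pos_pos) auto
      then show ?thesis using True y by simp
    qed simp
  qed
qed

lemma integral_good_bound:
  assumes m: "0 \<le> m" "ennreal m \<le> emeasure ell_measure good_set"
  shows "integrable lebesgue good_bound"
    and "lam * m / 2 ^ (DIM('a) + 2) * (- ln \<rho>) powr (1 - \<alpha>) \<le> integral\<^sup>L lebesgue good_bound"
proof -
  define h where "h y = indicator good_set y / norm y ^ DIM('a)" for y :: 'a
  define C where "C = lam * ell \<rho> powr \<alpha> / 2 ^ (DIM('a) + 2)"
  have C: "0 \<le> C" unfolding C_def using lam by simp
  have good_h: "good_bound = (\<lambda>y. C * h y)" unfolding good_bound_def h_def C_def by auto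
  have h: "integrable lebesgue h" unfolding h_def by (rule integrable_good_set_div_norm_pow)
  then show "integrable lebesgue good_bound" unfolding good_h by simp
  have "inverse (ell \<rho>) = - ln \<rho>" using rho rho_small by (simp add: ell_eq_small)
  moreover have "0 \<le> - ln \<rho>" using rho by linarith
  ultimately have "ennreal (- ln \<rho> * m) = ennreal (inverse (ell \<rho>)) * ennreal m"
    by (metis ennreal_mult')
  also have "\<dots> \<le> ennreal (inverse (ell \<rho>)) * emeasure ell_measure good_set"
    using m by (intro mult_left_mono) auto
  also have "\<dots> \<le> (\<integral>\<^sup>+y. ennreal (h y) \<partial>lebesgue)"
    unfolding h_def using good_set_measurable good_set_subset rho
    by (intro emeasure_ell_measure_le_nn_integral) auto
  also have "\<dots> = ennreal (integral\<^sup>L lebesgue h)"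
    using h unfolding h_def by (intro nn_integral_eq_integral) auto
  finally have "- ln \<rho> * m \<le> integral\<^sup>L lebesgue h"
    using integral_nonneg_AE[of h] by (simp add: ennreal_le_iff h_def)
  then have "C * (- ln \<rho> * m) \<le> C * integral\<^sup>L lebesgue h" using C by (intro mult_left_mono) auto
  then show "lam * m / 2 ^ (DIM('a) + 2) * (- ln \<rho>) powr (1 - \<alpha>) \<le> integral\<^sup>L lebesgue good_bound"
    unfolding good_h neg_ln_rho_powr C_def by (simp add: mult_ac)
qed

lemma set_integrable_integrand_at_xb:
  assumes K_meas: "(\<lambda>(x, z). K x z) \<in> borel_measurable borel"
    and u_dini: "dini_loc (ball 0 (2 * \<rho>^2)) u"
  shows "set_integrable lebesgue (ball xb 1) (L_K_integrand K u xb)"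
proof (rule set_integrable_L_K_integrand[OF K_meas _ _ _ _ u_dini u_integrable ball_xb_subset])
  show "\<forall>z\<in>ball 0 1. 0 \<le> K xb z \<and> K xb z \<le> Lam"
  proof
    fix z :: 'a assume "z \<in> ball 0 1"
    then have "lam \<le> K xb z \<and> K xb z \<le> Lam" using K_bounds by blast
    then show "0 \<le> K xb z \<and> K xb z \<le> Lam" using lam by linarith
  qed
  show "0 < \<rho>^2 / 4" "\<rho>^2 / 4 \<le> 1" using rho rho_small by auto
  show "cball xb (\<rho>^2 / 4) \<subseteq> ball 0 (2 * \<rho>^2)"
  proof
    fix y assume "y \<in> cball xb (\<rho>^2 / 4)"
    then have "norm (y - xb) \<le> \<rho>^2 / 4" by (simp add: dist_norm norm_minus_commute)
    moreover have "norm y \<le> norm xb + norm (y - xb)" by (metis add.commute diff_add_cancel norm_triangle_ineq)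
    moreover have "0 < \<rho>^2" using rho by simp
    ultimately have "norm y < 2 * \<rho>^2" using xb(1) by linarith
    then show "y \<in> ball 0 (2 * \<rho>^2)" by simp
  qed
qed

lemma emeasure_good_set_ge:
  assumes "ennreal (1/2) * emeasure (ell_measure :: 'b::euclidean_space measure) (ball 0 \<rho> - ball 0 (3 * \<rho>^2))
    \<le> emeasure ell_measure good_set"
  shows "ennreal (DIM('b) * unit_ball_vol DIM('b) / 8) \<le> emeasure ell_measure good_set"
proof -
  have "ennreal (1/2) * ennreal (DIM('b) * unit_ball_vol DIM('b) / 4)
      = ennreal (1/2 * (DIM('b) * unit_ball_vol DIM('b) / 4))"
    by (rule ennreal_mult'[symmetric]) simp
  then have "ennreal (DIM('b) * unit_ball_vol DIM('b) / 8)
      = ennreal (1/2) * ennreal (DIM('b) * unit_ball_vol DIM('b) / 4)"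
    by simp
  also have "\<dots> \<le> ennreal (1/2) * emeasure (ell_measure :: 'b measure) (ball 0 \<rho> - ball 0 (3 * \<rho>^2))"
    using emeasure_ell_measure_annulus_ge[OF rho] by (rule mult_left_mono) simp
  finally show ?thesis using assms by simp
qed

lemma L_K_at_touching_point_le:
  assumes integrand: "set_integrable lebesgue (ball xb 1) (L_K_integrand K u xb)"
    and m: "0 \<le> m" "ennreal m \<le> emeasure ell_measure good_set"
  shows "L_K K u xb \<le> (Lam * (DIM('a) * unit_ball_vol DIM('a)) * 5 ^ DIM('a)) * (24 * \<alpha> * (- ln \<rho>) powr (1 - \<alpha>) + 28)
    - lam * m / 2 ^ (DIM('a) + 2) * (- ln \<rho>) powr (1 - \<alpha>)"
proof -
  note near = integral_near_bound and far = integral_far_bound and good = integral_good_bound[OF m]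
  have "L_K K u xb = integral\<^sup>L lebesgue (\<lambda>y. indicator (ball xb 1) y * L_K_integrand K u xb y)"
    unfolding L_K_eq_set_integral set_lebesgue_integral_def by simp
  also have "\<dots> \<le> integral\<^sup>L lebesgue (\<lambda>y. near_bound y + far_bound y - good_bound y)"
    using integrand near(1) far(1) good(1) integrand_le_bounds
    by (intro integral_mono) (auto simp: set_integrable_def)
  also have "\<dots> = integral\<^sup>L lebesgue near_bound + integral\<^sup>L lebesgue far_bound - integral\<^sup>L lebesgue good_bound"
    using near(1) far(1) good(1) by simp
  finally show ?thesis using near(2) far(2) good(2) by (simp add: algebra_simps)
qed

lemma L_K_at_touching_point_lt:
  fixes B :: real
  defines "A \<equiv> Lam * (DIM('a) * unit_ball_vol DIM('a)) * 5 ^ DIM('a)"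
    and "Q \<equiv> (- ln \<rho>) powr (1 - \<alpha>)"
  assumes integrand: "set_integrable lebesgue (ball xb 1) (L_K_integrand K u xb)"
    and m: "0 \<le> m" "ennreal m \<le> emeasure ell_measure good_set" and B: "B = lam * m / 2 ^ (DIM('a) + 2)"
    and small: "24 * \<alpha> * A \<le> B / 4" "28 * A \<le> B / 4 * Q" "2 * \<delta> \<le> B / 4" and delta: "0 \<le> \<delta>"
  shows "L_K K u xb < - \<delta> * ell (\<rho>^2) powr (\<alpha> - 1)"
proof -
  have "0 < - ln \<rho>" using rho by linarith
  then have Q: "0 < Q" unfolding Q_def by simp
  have B_pos: "0 < B"
  proof -
    have "0 < A" unfolding A_def using Lam_pos by simp
    then have "0 < B / 4 * Q" using small(2) by linarith
    then show ?thesis using Q by (simp add: zero_less_mult_iff)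
  qed
  have "L_K K u xb \<le> A * (24 * \<alpha> * Q + 28) - B * Q"
    using L_K_at_touching_point_le[OF integrand m] unfolding A_def Q_def B by simp
  also have "\<dots> \<le> - (B / 2 * Q)"
  proof -
    have "24 * \<alpha> * A * Q \<le> B / 4 * Q" using small(1) Q by (intro mult_right_mono) auto
    then show ?thesis using small(2) by (simp add: algebra_simps)
  qed
  also have "\<dots> < - (2 * \<delta> * Q)"
  proof -
    have "2 * \<delta> * Q \<le> B / 4 * Q" using small(3) Q by (intro mult_right_mono) auto
    moreover have "0 < B / 2 * Q" using B_pos Q by simp
    ultimately show ?thesis by linarith
  qed
  also have "\<dots> \<le> - \<delta> * ell (\<rho>^2) powr (\<alpha> - 1)"
  proof -
    have "ell (\<rho>^2) powr (\<alpha> - 1) = 2 powr (1 - \<alpha>) * Q"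
      unfolding Q_def using rho rho_small by (simp add: ell_square_powr)
    moreover have "2 powr (1 - \<alpha>) \<le> 2" using alpha powr_mono[of "1 - \<alpha>" 1 2] by simp
    ultimately have "\<delta> * ell (\<rho>^2) powr (\<alpha> - 1) \<le> \<delta> * (2 * Q)"
      using Q delta by (simp add: mult_left_mono mult_right_mono)
    then show ?thesis by simp
  qed
  finally show ?thesis .
qed

end

section \<open>Choice of the constants\<close>

text \<open>
  In hypothesis (iii) of the theorem the measure on the right-hand side is not tied to the space
  of u: it lives on an arbitrary Euclidean space 'b, whose dimension therefore enters the constants.
\<close>

lemma barrier_lower_bound_at_scale:
  fixes lam Lam \<alpha> \<rho> \<delta> :: real and K :: "'a::euclidean_space \<Rightarrow> 'a \<Rightarrow> real" and u :: "'a \<Rightarrow> real"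
  defines "A \<equiv> Lam * (DIM('a) * unit_ball_vol DIM('a)) * 5 ^ DIM('a)"
    and "B \<equiv> lam * (DIM('b::euclidean_space) * unit_ball_vol DIM('b)) / 2 ^ (DIM('a) + 5)"
  assumes lam: "0 < lam" "lam \<le> Lam"
    and alpha: "0 < \<alpha>" "\<alpha> \<le> 1/8" "24 * \<alpha> * A \<le> B / 4"
    and rho: "0 < \<rho>" "10 \<le> - ln \<rho>" "28 * A \<le> B / 4 * (- ln \<rho>) powr (1 - \<alpha>)"
    and delta: "0 \<le> \<delta>" "2 * \<delta> \<le> B / 4"
    and K_meas: "(\<lambda>(x, z). K x z) \<in> borel_measurable borel"
    and K_bounds: "\<forall>x\<in>ball 0 (2 * \<rho>^2). \<forall>z\<in>ball 0 1. lam \<le> K x z \<and> K x z \<le> Lam"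
    and u_integrable: "set_integrable lebesgue (ball 0 (1 + 2 * \<rho>^2)) u"
    and u_dini: "dini_loc (ball 0 (2 * \<rho>^2)) u"
    and L_K_lower: "\<forall>x\<in>ball 0 (2 * \<rho>^2). L_K K u x \<ge> - \<delta> * ell (\<rho>^2) powr (\<alpha> - 1)"
    and u_lower: "\<forall>x\<in>ball 0 (1 + 2 * \<rho>^2). u x \<ge> - max 0 (ell (norm x) powr \<alpha> - ell \<rho> powr \<alpha>)"
    and good: "emeasure ell_measure ({x. u x \<ge> ell \<rho> powr \<alpha> / 2} \<inter> (ball 0 \<rho> - ball 0 (3 * \<rho>^2)))
        \<ge> ennreal (1/2) * emeasure (ell_measure :: 'b measure) (ball 0 \<rho> - ball 0 (3 * \<rho>^2))"
  shows "\<forall>x\<in>ball 0 (\<rho>^2). u x \<ge> ell \<rho> powr \<alpha> - ell (\<rho>^2) powr \<alpha>"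
proof (intro ballI, rule ccontr)
  fix x0 assume x0: "x0 \<in> ball 0 (\<rho>^2)" "\<not> ell \<rho> powr \<alpha> - ell (\<rho>^2) powr \<alpha> \<le> u x0"
  define T where "T = ell \<rho> powr \<alpha> - ell (\<rho>^2) powr \<alpha>"
  have rho_small: "\<rho> < 1/10" using rho(1,2) by (rule less_one_tenth_if_neg_ln_ge_10)
  have T: "0 < T" "T \<le> \<alpha> * ell \<rho> powr \<alpha>"
    unfolding T_def using ell_powr_square_gap rho(1) rho_small alpha(1) by auto
  have u_lower': "\<forall>x\<in>ball 0 (1 + 2 * \<rho>^2). - barrier_excess \<alpha> \<rho> (norm x) \<le> u x"
    using u_lower by (simp add: barrier_excess_def)
  obtain xb where xb: "norm xb < 3/2 * \<rho>^2" "u xb < 2 * T"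
    "\<forall>y\<in>cball 0 (19/10 * \<rho>^2). u xb - u y \<le> T * (norm y ^ 2 - norm xb ^ 2) / (\<rho>^2)^2"
    using exists_touching_point_of_barrier[OF rho(1) rho_small _ T(1) u_dini u_lower' x0(1)] alpha x0(2)
    unfolding T_def by auto
  have "0 < \<rho>^2" using rho(1) by simp
  then have "norm xb < 2 * \<rho>^2" using xb(1) by linarith
  then have xb_ball: "xb \<in> ball 0 (2 * \<rho>^2)" by simp
  interpret C: touching_configuration lam Lam \<alpha> \<rho> T K u xb
    using lam alpha rho T K_bounds xb_ball u_integrable u_lower' xb by unfold_locales auto
  have "B = lam * (DIM('b) * unit_ball_vol DIM('b) / 8) / 2 ^ (DIM('a) + 2)"
    unfolding B_def by (simp add: power_add)
  then have "L_K K u xb < - \<delta> * ell (\<rho>^2) powr (\<alpha> - 1)"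
    using alpha(3) rho(3) delta C.set_integrable_integrand_at_xb[OF K_meas u_dini]
      C.emeasure_good_set_ge[OF good[folded C.good_set_def]] unfolding A_def
    by (intro C.L_K_at_touching_point_lt[where m = "DIM('b) * unit_ball_vol DIM('b) / 8" and B = B]) auto
  then show False using L_K_lower xb_ball by fastforce
qed

lemma exists_small_constants:
  fixes A B :: real
  assumes A: "0 < A" and B: "0 < B"
  shows "\<exists>r0 \<alpha> \<delta>. r0 \<in> {0<..<1} \<and> \<alpha> \<in> {0<..<1} \<and> \<delta> \<in> {0<..<1} \<and>
    \<alpha> \<le> 1/8 \<and> 24 * \<alpha> * A \<le> B / 4 \<and> 2 * \<delta> \<le> B / 4 \<and>
    (\<forall>\<rho>. 0 < \<rho> \<and> \<rho> < r0 \<longrightarrow> 10 \<le> - ln \<rho> \<and> 28 * A \<le> B / 4 * (- ln \<rho>) powr (1 - \<alpha>))"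
proof -
  define \<alpha> where "\<alpha> = min (1/8) (B / (96 * A))"
  define \<delta> where "\<delta> = min (1/2) (B / 8)"
  define M where "M = max 10 ((112 * A / B)^2)"
  have alpha: "0 < \<alpha>" "\<alpha> \<le> 1/8" "24 * \<alpha> * A \<le> B / 4"
  proof -
    show "0 < \<alpha>" "\<alpha> \<le> 1/8" unfolding \<alpha>_def using A B by auto
    have "\<alpha> * A \<le> B / (96 * A) * A" unfolding \<alpha>_def using A by (intro mult_right_mono) auto
    then show "24 * \<alpha> * A \<le> B / 4" using A by (simp add: field_simps)
  qed
  have "10 \<le> - ln \<rho> \<and> 28 * A \<le> B / 4 * (- ln \<rho>) powr (1 - \<alpha>)" if "0 < \<rho>" "\<rho> < exp (- M)" for \<rho>
  proof -
    have "ln \<rho> < - M" using that by (metis ln_exp ln_less_cancel_iff exp_gt_zero)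
    then have LM: "M < - ln \<rho>" by simp
    then have L1: "1 \<le> - ln \<rho>" unfolding M_def by simp
    have "sqrt (- ln \<rho>) = (- ln \<rho>) powr (1/2)" using L1 by (simp add: powr_half_sqrt)
    also have "\<dots> \<le> (- ln \<rho>) powr (1 - \<alpha>)" using L1 alpha by (intro powr_mono) auto
    finally have "sqrt (- ln \<rho>) \<le> (- ln \<rho>) powr (1 - \<alpha>)" .
    moreover have "112 * A / B \<le> sqrt (- ln \<rho>)"
      using real_sqrt_le_mono[of "(112 * A / B)^2" "- ln \<rho>"] LM A B unfolding M_def by simp
    ultimately have "B / 4 * (112 * A / B) \<le> B / 4 * (- ln \<rho>) powr (1 - \<alpha>)"
      using B by (intro mult_left_mono) auto
    moreover have "B / 4 * (112 * A / B) = 28 * A" using B by simp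
    ultimately show ?thesis using LM unfolding M_def by simp
  qed
  moreover have "0 < exp (- M)" "exp (- M) < 1" unfolding M_def by auto
  moreover have "\<delta> \<in> {0<..<1}" "2 * \<delta> \<le> B / 4" unfolding \<delta>_def using B by auto
  ultimately show ?thesis using alpha by (intro exI[of _ "exp (- M)"] exI[of _ \<alpha>] exI[of _ \<delta>]) auto
qed

theorem lemma4p4:
  fixes lam Lam :: real
  assumes "0 < lam" and "lam \<le> Lam"
  shows "\<exists>r0 \<alpha> \<delta>. r0 \<in> {0<..<1} \<and> \<alpha> \<in> {0<..<1} \<and> \<delta> \<in> {0<..<1} \<and>
    (\<forall>(\<rho>::real) (K::'a::euclidean_space \<Rightarrow> 'a \<Rightarrow> real) (u::'a \<Rightarrow> real).
      \<rho> \<in> {0<..<r0} \<and>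
      (\<lambda>(x, z). K x z) \<in> borel_measurable borel \<and>
      (\<forall>x\<in>ball 0 (2 * \<rho>^2). \<forall>z\<in>ball 0 1. lam \<le> K x z \<and> K x z \<le> Lam) \<and>
      set_integrable lebesgue (ball 0 (1 + 2 * \<rho>^2)) u \<and>
      dini_loc (ball 0 (2 * \<rho>^2)) u \<and>
      (\<forall>x\<in>ball 0 (2 * \<rho>^2). L_K K u x \<ge> - \<delta> * ell (\<rho>^2) powr (\<alpha> - 1)) \<and>
      (\<forall>x\<in>ball 0 (1 + 2 * \<rho>^2). u x \<ge> - max 0 (ell (norm x) powr \<alpha> - ell \<rho> powr \<alpha>)) \<and>
      emeasure ell_measure ({x. u x \<ge> ell \<rho> powr \<alpha> / 2} \<inter> (ball 0 \<rho> - ball 0 (3 * \<rho>^2)))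
        \<ge> ennreal (1/2) * emeasure ell_measure (ball 0 \<rho> - ball 0 (3 * \<rho>^2))
      \<longrightarrow> (\<forall>x\<in>ball 0 (\<rho>^2). u x \<ge> ell \<rho> powr \<alpha> - ell (\<rho>^2) powr \<alpha>))"
proof -
  define A where "A = Lam * (DIM('a) * unit_ball_vol DIM('a)) * 5 ^ DIM('a)"
  define B where "B = lam * (DIM('b) * unit_ball_vol DIM('b)) / 2 ^ (DIM('a) + 5)"
  have "0 < A" "0 < B" using assms unfolding A_def B_def by auto
  from exists_small_constants[OF this] obtain r0 \<alpha> \<delta>
    where r0: "r0 \<in> {0<..<1}" and alpha: "\<alpha> \<in> {0<..<1}" "\<alpha> \<le> 1/8" "24 * \<alpha> * A \<le> B / 4"
    and delta: "\<delta> \<in> {0<..<1}" "2 * \<delta> \<le> B / 4"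
    and rho: "\<And>\<rho>. 0 < \<rho> \<Longrightarrow> \<rho> < r0 \<Longrightarrow> 10 \<le> - ln \<rho> \<and> 28 * A \<le> B / 4 * (- ln \<rho>) powr (1 - \<alpha>)"
    by blast
  show ?thesis
  proof (rule exI[of _ r0], rule exI[of _ \<alpha>], rule exI[of _ \<delta>], intro conjI allI impI, goal_cases)
    case (4 \<rho> K u)
    then show ?case
      by (elim conjE,
          intro barrier_lower_bound_at_scale[where 'b = 'b, of lam Lam \<alpha> \<rho> \<delta> K u, folded A_def B_def])
        (use assms alpha delta rho[of \<rho>] in auto)
  qed (use r0 alpha delta in auto)
qed

end
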